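(* Suppose the regularity conditions hold: $n_i(1)>0$ and $n_i(0)>0$ for every link $i\in E$, and $\sum_{j\in F_i}n_j(1)<\sum_{j\in B_i}n_j(1)$ for every non-root link $i\notin\mathscr S$. Then for every non-root link $i$ the equation $x=\prod_{j\in B_i}\big[(1-r_j)+r_jx\big]$ has a unique solution $\hat\pi_i\in(0,1)$, and the system $$\xi_i=(1-r_i)+r_i\cdot\mathbf 1(i\notin\mathscr S)\cdot\prod_{j\in B_i}\xi_j,\qquad i\in E,$$ has a unique solution $\hat\xi\in(0,1)^m$, given by $\hat\xi_i=1-r_i$ for $i\in\mathscr S$ and $\hat\xi_i=(1-r_i)+r_i\hat\pi_i$ otherwise. If in addition $\hat\xi\in\Xi$, then $\hat\theta=\Gamma^{-1}(\hat\xi)\in\Theta$ is the maximum likelihood estimate of $\theta$ over $\Theta$.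
   Context: Network: a finite set of directed links $E=\{1,\dots,m\}$ between nodes, forming a directed acyclic graph. For a link $i$, $C_i$ is the set of links whose tail is the head of $i$ (child links); $B_i$ is the set of links having the same tail as $i$ (brother links, including $i$ itself); $F_i$ is the set of links whose head is the tail of $i$ (parent links). A link $i$ is a leaf link if $C_i=\emptyset$; $R_i$ is the set of leaf links that are descendants of $i$ (including $i$ itself if $i$ is a leaf). The network is covered by $K\ge1$ multicast trees $T_1,\dots,T_K$: $T_k$ has a root link $S_k$ whose tail is a source node with no incoming link ($F_{S_k}=\emptyset$); its link set $E_k$ consists of $S_k$ and all descendants of $S_k$; every link $i\in E_k\setminus\{S_k\}$ has exactly one parent link in $E_k$, denoted $f^{(k)}_i\in F_i\cap E_k$; every link belongs to some $E_k$; each root link $S_k$ belongs only to $E_k$. $\mathscr S=\{S_1,\dots,S_K\}$. Loss model: each link $i$ has loss rate $\theta_i$, $\theta\in\Theta=(0,1)^m$. From the source of tree $T_k$, $n_k$ probes are sent; $X^{(k,t)}_i=1$ if probe $t$ of tree $k$ reached the head of link $i\in E_k$; a probe at the tail of link $i$ traverses it with probability $1-\theta_i$, independently across links, probes and trees; a probe not at the tail of $i$ does not reach its head; only $X^{(k,t)}_r$ for leaf links $r$ are observed. The maximum likelihood estimate is the maximizer over $\Theta$ of the log-probability of the observed data. Internal views: $Y^{(k,t)}_i=\max_{r\in R_i}X^{(k,t)}_r$ for $i\in E_k$; $n_{k,i}(1)=\sum_{t=1}^{n_k}Y^{(k,t)}_i$ for $i\in E_k$ and $0$ otherwise; $n_{k,S_k}(0)=n_k-n_{k,S_k}(1)$,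 $n_{k,i}(0)=n_{k,f^{(k)}_i}(1)-n_{k,i}(1)$ for $i\in E_k\setminus\{S_k\}$, and $0$ for $i\notin E_k$; $n_i(1)=\sum_k n_{k,i}(1)$, $n_i(0)=\sum_k n_{k,i}(0)$; $r_i=n_i(1)/(n_i(1)+n_i(0))$. Parameter map: $\xi_i(\theta)=\theta_i$ for leaf $i$ and $\xi_i(\theta)=\theta_i+(1-\theta_i)\prod_{j\in C_i}\xi_j(\theta)$ otherwise (recursively from the leaves); $\Gamma(\theta)=(\xi_i(\theta))_i$; $\Xi=\Gamma(\Theta)=\{\xi\in(0,1)^m:\xi_i>\prod_{j\in C_i}\xi_j$ for every non-leaf $i\}$; $\Gamma^{-1}(\xi)_i=\xi_i$ for leaf $i$ and $\Gamma^{-1}(\xi)_i=(\xi_i-\prod_{j\in C_i}\xi_j)/(1-\prod_{j\in C_i}\xi_j)$ otherwise. *)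

theory Defs
  imports Complex_Main
begin

text \<open>Links are the elements of a finite type 'e (so E = UNIV); nodes have type 'v.
  Trees are indexed by k < K; S k is the root link of tree k.\<close>

definition children :: "('e \<Rightarrow> 'v) \<Rightarrow> ('e \<Rightarrow> 'v) \<Rightarrow> 'e \<Rightarrow> 'e set" where
  "children tail head i = {j. tail j = head i}"

definition brothers :: "('e \<Rightarrow> 'v) \<Rightarrow> 'e \<Rightarrow> 'e set" where
  "brothers tail i = {j. tail j = tail i}"

definition parents :: "('e \<Rightarrow> 'v) \<Rightarrow> ('e \<Rightarrow> 'v) \<Rightarrow> 'e \<Rightarrow> 'e set" where
  "parents tail head i = {j. head j = tail i}"

definition is_leaf :: "('e \<Rightarrow> 'v) \<Rightarrow> ('e \<Rightarrow> 'v) \<Rightarrow> 'e \<Rightarrow> bool" where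
  "is_leaf tail head i \<longleftrightarrow> children tail head i = {}"

definition child_rel :: "('e \<Rightarrow> 'v) \<Rightarrow> ('e \<Rightarrow> 'v) \<Rightarrow> ('e \<times> 'e) set" where
  "child_rel tail head = {(i, j). j \<in> children tail head i}"

definition desc :: "('e \<Rightarrow> 'v) \<Rightarrow> ('e \<Rightarrow> 'v) \<Rightarrow> 'e \<Rightarrow> 'e set" where
  "desc tail head i = {j. (i, j) \<in> (child_rel tail head)\<^sup>*}"

definition leaf_desc :: "('e \<Rightarrow> 'v) \<Rightarrow> ('e \<Rightarrow> 'v) \<Rightarrow> 'e \<Rightarrow> 'e set" where
  "leaf_desc tail head i = {r \<in> desc tail head i. is_leaf tail head r}"

definition tree_links :: "('e \<Rightarrow> 'v) \<Rightarrow> ('e \<Rightarrow> 'v) \<Rightarrow> (nat \<Rightarrow> 'e) \<Rightarrow> nat \<Rightarrow> 'e set" where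
  "tree_links tail head S k = desc tail head (S k)"

definition tparent :: "('e \<Rightarrow> 'v) \<Rightarrow> ('e \<Rightarrow> 'v) \<Rightarrow> (nat \<Rightarrow> 'e) \<Rightarrow> nat \<Rightarrow> 'e \<Rightarrow> 'e" where
  "tparent tail head S k i = (THE j. j \<in> parents tail head i \<and> j \<in> tree_links tail head S k)"

definition roots :: "(nat \<Rightarrow> 'e) \<Rightarrow> nat \<Rightarrow> 'e set" where
  "roots S K = S ` {..<K}"

definition multicast_network ::
  "('e::finite \<Rightarrow> 'v) \<Rightarrow> ('e \<Rightarrow> 'v) \<Rightarrow> nat \<Rightarrow> (nat \<Rightarrow> 'e) \<Rightarrow> bool" where
  "multicast_network tail head K S \<longleftrightarrow>
     K \<ge> 1 \<and>
     acyclic {(tail e, head e) | e. True} \<and>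
     (\<forall>k<K. parents tail head (S k) = {}) \<and>
     (\<forall>k<K. \<forall>i \<in> tree_links tail head S k - {S k}.
        (\<exists>!j. j \<in> parents tail head i \<and> j \<in> tree_links tail head S k)) \<and>
     (\<forall>i. \<exists>k<K. i \<in> tree_links tail head S k) \<and>
     (\<forall>k<K. \<forall>l<K. S k \<in> tree_links tail head S l \<longrightarrow> l = k)"

text \<open>Loss model. For tree k and a set A of links whose heads the probe reached
  (A \<subseteq> E_k), the factor contributed by link i \<in> E_k.\<close>
definition link_factor ::
  "('e \<Rightarrow> 'v) \<Rightarrow> ('e \<Rightarrow> 'v) \<Rightarrow> (nat \<Rightarrow> 'e) \<Rightarrow> ('e \<Rightarrow> real) \<Rightarrow> nat \<Rightarrow> 'e set \<Rightarrow> 'e \<Rightarrow> real" where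
  "link_factor tail head S \<theta> k A i =
     (if i = S k \<or> tparent tail head S k i \<in> A
      then (if i \<in> A then 1 - \<theta> i else \<theta> i)
      else (if i \<in> A then 0 else 1))"

definition obs_prob ::
  "('e::finite \<Rightarrow> 'v) \<Rightarrow> ('e \<Rightarrow> 'v) \<Rightarrow> (nat \<Rightarrow> 'e) \<Rightarrow> ('e \<Rightarrow> real) \<Rightarrow> nat \<Rightarrow> 'e set \<Rightarrow> real" where
  "obs_prob tail head S \<theta> k Ob =
     (\<Sum>A \<in> {A. A \<subseteq> tree_links tail head S k \<and> {r \<in> A. is_leaf tail head r} = Ob}.
        \<Prod>i \<in> tree_links tail head S k. link_factor tail head S \<theta> k A i)"

text \<open>obs k t = set of leaf links reached by probe t (t < n k) of tree k.\<close>
definition loglik ::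
  "('e::finite \<Rightarrow> 'v) \<Rightarrow> ('e \<Rightarrow> 'v) \<Rightarrow> nat \<Rightarrow> (nat \<Rightarrow> 'e) \<Rightarrow> (nat \<Rightarrow> nat)
     \<Rightarrow> (nat \<Rightarrow> nat \<Rightarrow> 'e set) \<Rightarrow> ('e \<Rightarrow> real) \<Rightarrow> real" where
  "loglik tail head K S n obs \<theta> =
     (\<Sum>k<K. \<Sum>t<n k. ln (obs_prob tail head S \<theta> k (obs k t)))"

definition Theta :: "('e \<Rightarrow> real) set" where
  "Theta = {\<theta>. \<forall>i. 0 < \<theta> i \<and> \<theta> i < 1}"

definition is_MLE ::
  "('e::finite \<Rightarrow> 'v) \<Rightarrow> ('e \<Rightarrow> 'v) \<Rightarrow> nat \<Rightarrow> (nat \<Rightarrow> 'e) \<Rightarrow> (nat \<Rightarrow> nat)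
     \<Rightarrow> (nat \<Rightarrow> nat \<Rightarrow> 'e set) \<Rightarrow> ('e \<Rightarrow> real) \<Rightarrow> bool" where
  "is_MLE tail head K S n obs \<theta>h \<longleftrightarrow>
     \<theta>h \<in> Theta \<and> (\<forall>\<theta> \<in> Theta. loglik tail head K S n obs \<theta> \<le> loglik tail head K S n obs \<theta>h)"

definition nk1 ::
  "('e::finite \<Rightarrow> 'v) \<Rightarrow> ('e \<Rightarrow> 'v) \<Rightarrow> (nat \<Rightarrow> 'e) \<Rightarrow> (nat \<Rightarrow> nat)
     \<Rightarrow> (nat \<Rightarrow> nat \<Rightarrow> 'e set) \<Rightarrow> nat \<Rightarrow> 'e \<Rightarrow> nat" where
  "nk1 tail head S n obs k i =
     (if i \<in> tree_links tail head S k
      then card {t. t < n k \<and> (\<exists>r \<in> leaf_desc tail head i. r \<in> obs k t)}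
      else 0)"

definition nk0 ::
  "('e::finite \<Rightarrow> 'v) \<Rightarrow> ('e \<Rightarrow> 'v) \<Rightarrow> (nat \<Rightarrow> 'e) \<Rightarrow> (nat \<Rightarrow> nat)
     \<Rightarrow> (nat \<Rightarrow> nat \<Rightarrow> 'e set) \<Rightarrow> nat \<Rightarrow> 'e \<Rightarrow> nat" where
  "nk0 tail head S n obs k i =
     (if i \<notin> tree_links tail head S k then 0
      else if i = S k then n k - nk1 tail head S n obs k i
      else nk1 tail head S n obs k (tparent tail head S k i) - nk1 tail head S n obs k i)"

definition n1 ::
  "('e::finite \<Rightarrow> 'v) \<Rightarrow> ('e \<Rightarrow> 'v) \<Rightarrow> nat \<Rightarrow> (nat \<Rightarrow> 'e) \<Rightarrow> (nat \<Rightarrow> nat)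
     \<Rightarrow> (nat \<Rightarrow> nat \<Rightarrow> 'e set) \<Rightarrow> 'e \<Rightarrow> nat" where
  "n1 tail head K S n obs i = (\<Sum>k<K. nk1 tail head S n obs k i)"

definition n0 ::
  "('e::finite \<Rightarrow> 'v) \<Rightarrow> ('e \<Rightarrow> 'v) \<Rightarrow> nat \<Rightarrow> (nat \<Rightarrow> 'e) \<Rightarrow> (nat \<Rightarrow> nat)
     \<Rightarrow> (nat \<Rightarrow> nat \<Rightarrow> 'e set) \<Rightarrow> 'e \<Rightarrow> nat" where
  "n0 tail head K S n obs i = (\<Sum>k<K. nk0 tail head S n obs k i)"

definition rate ::
  "('e::finite \<Rightarrow> 'v) \<Rightarrow> ('e \<Rightarrow> 'v) \<Rightarrow> nat \<Rightarrow> (nat \<Rightarrow> 'e) \<Rightarrow> (nat \<Rightarrow> nat)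
     \<Rightarrow> (nat \<Rightarrow> nat \<Rightarrow> 'e set) \<Rightarrow> 'e \<Rightarrow> real" where
  "rate tail head K S n obs i =
     real (n1 tail head K S n obs i) / real (n1 tail head K S n obs i + n0 tail head K S n obs i)"

text \<open>Parameter space Xi = Gamma(Theta) and the inverse map.\<close>
definition Xi :: "('e::finite \<Rightarrow> 'v) \<Rightarrow> ('e \<Rightarrow> 'v) \<Rightarrow> ('e \<Rightarrow> real) set" where
  "Xi tail head = {\<xi>. (\<forall>i. 0 < \<xi> i \<and> \<xi> i < 1) \<and>
      (\<forall>i. \<not> is_leaf tail head i \<longrightarrow> \<xi> i > (\<Prod>j \<in> children tail head i. \<xi> j))}"

definition Gamma_inv :: "('e::finite \<Rightarrow> 'v) \<Rightarrow> ('e \<Rightarrow> 'v) \<Rightarrow> ('e \<Rightarrow> real) \<Rightarrow> 'e \<Rightarrow> real" where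
  "Gamma_inv tail head \<xi> i =
     (if is_leaf tail head i then \<xi> i
      else (\<xi> i - (\<Prod>j \<in> children tail head i. \<xi> j)) / (1 - (\<Prod>j \<in> children tail head i. \<xi> j)))"

end

theory Submission
  imports Defs
begin

text \<open>
  Reparametrize by \<open>\<xi> = \<Gamma>(\<theta>)\<close>, where \<open>\<xi>\<^sub>i\<close> is the probability that a probe at the
  tail of \<open>i\<close> reaches no leaf below \<open>i\<close>. Summing out the unobserved internal states tree by tree,
  the log-likelihood becomes \<open>\<Sum>\<^sub>i n\<^sub>i(1) ln(1 - \<theta>\<^sub>i) + n\<^sub>i(0) ln \<xi>\<^sub>i\<close>, and regrouping it by
  nodes turns it into a sum of independent terms, one for each set \<open>B\<close> of brother links.
  The counting identity \<open>n\<^sub>j(1) + n\<^sub>j(0) = \<Sum>\<^bsub>p \<in> F\<^sub>j\<^esub> n\<^sub>p(1)\<close> makes the term of \<open>B\<close> a multiple of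
  a cross entropy between two distributions of the nonempty set of links of \<open>B\<close> through which
  a probe is seen, the first one determined by the rates \<open>r\<close>, the second by \<open>\<xi>\<close>. By Gibbs'
  inequality each term is maximal where the two distributions agree, which is exactly the
  fixed-point system defining \<open>\<xi>\<close>; the equality case of Gibbs' inequality also gives uniqueness of
  the fixed point, and existence follows from the intermediate value theorem.
\<close>

section \<open>Gibbs' inequality and the likelihood of a set of brother links\<close>

lemma ln_less_minus_one:
  fixes x :: real
  assumes "0 < x" "x \<noteq> 1"
  shows "ln x < x - 1"
  using ln_le_minus_one[OF assms(1)] ln_eq_minus_one[OF assms(1)] assms(2) by fastforce

lemma mult_ln_diff_le:
  fixes a b :: real
  assumes "0 < a" "0 < b"
  shows "a * ln b - a * ln a \<le> b - a"
    and "a \<noteq> b \<Longrightarrow> a * ln b - a * ln a < b - a"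
proof -
  have ratio: "a * ln b - a * ln a = a * ln (b / a)" "a * (b / a - 1) = b - a"
    using assms by (simp_all add: ln_div field_simps)
  show "a * ln b - a * ln a \<le> b - a"
    unfolding ratio using assms ln_le_minus_one[of "b / a"] by (simp flip: ratio(2))
  show "a * ln b - a * ln a < b - a" if "a \<noteq> b"
    unfolding ratio using assms that ln_less_minus_one[of "b / a"] by (simp flip: ratio(2))
qed

lemma gibbs_inequality:
  fixes a b :: "'x \<Rightarrow> real"
  assumes "finite S" "\<And>x. x \<in> S \<Longrightarrow> 0 < a x" "\<And>x. x \<in> S \<Longrightarrow> 0 < b x" "sum b S = sum a S"
  shows "(\<Sum>x\<in>S. a x * ln (b x)) \<le> (\<Sum>x\<in>S. a x * ln (a x))"
proof -
  have "(\<Sum>x\<in>S. a x * ln (b x) - a x * ln (a x)) \<le> (\<Sum>x\<in>S. b x - a x)"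
    using assms by (intro sum_mono mult_ln_diff_le) auto
  then show ?thesis using assms(4) by (simp add: sum_subtractf)
qed

lemma gibbs_inequality_eq:
  fixes a b :: "'x \<Rightarrow> real"
  assumes "finite S" "\<And>x. x \<in> S \<Longrightarrow> 0 < a x" "\<And>x. x \<in> S \<Longrightarrow> 0 < b x" "sum b S = sum a S"
    and "(\<Sum>x\<in>S. a x * ln (b x)) = (\<Sum>x\<in>S. a x * ln (a x))" "x \<in> S"
  shows "a x = b x"
proof (rule ccontr)
  assume "a x \<noteq> b x"
  then have "(\<Sum>x\<in>S. a x * ln (b x) - a x * ln (a x)) < (\<Sum>x\<in>S. b x - a x)"
    using assms mult_ln_diff_le by (intro sum_strict_mono_ex1) (auto intro!: bexI[of _ x])
  then show False using assms(4,5) by (simp add: sum_subtractf)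
qed

lemma binomial_loglik_le:
  fixes a b x :: real
  assumes "0 < a" "0 < b" "0 < x" "x < 1"
  shows "a * ln (1 - x) + b * ln x \<le> a * ln (a / (a + b)) + b * ln (b / (a + b))"
proof -
  define N where "N = a + b"
  have N: "0 < N" using assms by (simp add: N_def)
  have "a * ln (N * (1 - x)) - a * ln a \<le> N * (1 - x) - a"
    and "b * ln (N * x) - b * ln b \<le> N * x - b"
    using assms N by (intro mult_ln_diff_le; simp)+
  moreover have "a * ln (N * (1 - x)) = a * ln N + a * ln (1 - x)" "b * ln (N * x) = b * ln N + b * ln x"
    using assms N by (simp_all add: ln_mult_pos distrib_left)
  moreover have "a * ln (a / N) + b * ln (b / N) = a * ln a + b * ln b - a * ln N - b * ln N"
    using assms N by (simp add: ln_divide_pos algebra_simps)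
  moreover have "N * (1 - x) - a + (N * x - b) = 0" by (simp add: N_def algebra_simps)
  ultimately show ?thesis unfolding N_def[symmetric] by linarith
qed

lemma prod_pos_less_one:
  fixes f :: "'a \<Rightarrow> real"
  assumes "finite B" "B \<noteq> {}" "\<And>l. l \<in> B \<Longrightarrow> 0 < f l \<and> f l < 1"
  shows "0 < prod f B \<and> prod f B < 1"
proof
  show "0 < prod f B" using assms by (intro prod_pos) auto
  obtain l where l: "l \<in> B" using assms by auto
  have "prod f B = f l * prod f (B - {l})" using l assms by (simp add: prod.remove)
  also have "\<dots> \<le> f l" using assms l by (intro mult_left_le prod_le_1) (auto dest: assms(3))
  finally show "prod f B < 1" using assms l by fastforce
qed

lemma prod_one_minus_le:
  fixes a :: "'a \<Rightarrow> real"
  assumes "finite B" "\<And>l. l \<in> B \<Longrightarrow> 0 \<le> a l \<and> a l \<le> 1"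
  shows "(\<Prod>l\<in>B. 1 - a l) \<le> 1 - sum a B + (sum a B)\<^sup>2 / 2"
  using assms
proof (induction B rule: finite_induct)
  case (insert x F)
  define s where "s = sum a F"
  have ax: "0 \<le> a x" "a x \<le> 1" using insert by auto
  have "(\<Prod>l\<in>insert x F. 1 - a l) \<le> (1 - a x) * (1 - s + s\<^sup>2 / 2)"
    using insert ax by (simp add: s_def mult_left_mono)
  also have "\<dots> \<le> 1 - (a x + s) + (a x + s)\<^sup>2 / 2"
    using ax mult_nonneg_nonneg[OF ax(1) zero_le_power2[of s]] by (simp add: power2_eq_square algebra_simps)
  finally show ?case using insert by (simp add: s_def)
qed simp

lemma prod_fixed_point_exists:
  fixes r :: "'a \<Rightarrow> real"
  assumes "finite B" "\<And>l. l \<in> B \<Longrightarrow> 0 < r l \<and> r l < 1" "sum r B > 1"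
  shows "\<exists>x. 0 < x \<and> x < 1 \<and> x = (\<Prod>l\<in>B. 1 - r l + r l * x)"
proof -
  define R where "R = sum r B"
  \<comment> \<open>at \<open>x = 1 - e\<close> the quadratic bound of \<open>prod_one_minus_le\<close> puts the product below \<open>x\<close>\<close>
  define e where "e = (R - 1) / R\<^sup>2"
  have R: "R > 1" using assms by (simp add: R_def)
  have e: "0 < e" "e < 1"
    using R by (simp_all add: e_def power2_eq_square field_simps) (smt (verit) mult_less_cancel_left1)
  define g where "g x = x - (\<Prod>l\<in>B. 1 - r l + r l * x)" for x
  have "g 0 < 0" unfolding g_def using assms by (simp, intro prod_pos) auto
  moreover have "(\<Prod>l\<in>B. 1 - r l + r l * (1 - e)) < 1 - e"
  proof -
    have "(\<Prod>l\<in>B. 1 - r l + r l * (1 - e)) = (\<Prod>l\<in>B. 1 - e * r l)"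
      by (simp add: algebra_simps)
    also have "\<dots> \<le> 1 - (\<Sum>l\<in>B. e * r l) + (\<Sum>l\<in>B. e * r l)\<^sup>2 / 2"
      using assms(2) e by (intro prod_one_minus_le assms(1)) (fastforce intro: mult_le_one)
    also have "\<dots> = 1 - e * R + (e * R)\<^sup>2 / 2"
      by (simp add: R_def sum_distrib_left)
    also have "\<dots> = 1 - e * R + e * (R - 1) / 2"
      using R by (simp add: e_def power2_eq_square)
    also have "\<dots> < 1 - e" using e R by (simp add: field_simps)
    finally show ?thesis .
  qed
  then have "g (1 - e) > 0" by (simp add: g_def)
  moreover have "continuous_on {0..1 - e} g" unfolding g_def by (intro continuous_intros)
  ultimately obtain x where "0 \<le> x" "x \<le> 1 - e" "g x = 0"
    using IVT'[of g 0 0 "1 - e"] e by auto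
  moreover have "x \<noteq> 0" using \<open>g x = 0\<close> \<open>g 0 < 0\<close> by auto
  ultimately show ?thesis using e by (intro exI[of _ x]) (auto simp: g_def)
qed

text \<open>
  For a set \<open>B\<close> of brother links, \<open>\<xi> l\<close> is the probability that no observation comes through
  \<open>l\<close>; \<open>cond_reach_prob \<xi> B A\<close> is the probability that the observations come through exactly the
  links of \<open>A\<close>, conditional on some link of \<open>B\<close> being seen. \<open>group_loglik r \<xi> B\<close> is the
  contribution of \<open>B\<close> to the log-likelihood, divided by the number of probes reaching its tail.
\<close>

definition reach_prob :: "('a \<Rightarrow> real) \<Rightarrow> 'a set \<Rightarrow> 'a set \<Rightarrow> real" where
  "reach_prob \<xi> B A = (\<Prod>l\<in>A. 1 - \<xi> l) * (\<Prod>l\<in>B - A. \<xi> l)"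

definition cond_reach_prob :: "('a \<Rightarrow> real) \<Rightarrow> 'a set \<Rightarrow> 'a set \<Rightarrow> real" where
  "cond_reach_prob \<xi> B A = reach_prob \<xi> B A / (1 - prod \<xi> B)"

definition group_loglik :: "('a \<Rightarrow> real) \<Rightarrow> ('a \<Rightarrow> real) \<Rightarrow> 'a set \<Rightarrow> real" where
  "group_loglik r \<xi> B =
     (\<Sum>l\<in>B. r l * ln (1 - \<xi> l) + (1 - r l) * ln (\<xi> l)) - ln (1 - prod \<xi> B)"

lemma sum_reach_prob: "finite B \<Longrightarrow> (\<Sum>A\<in>Pow B. reach_prob \<xi> B A) = 1"
  using prod_add[of B "\<lambda>l. 1 - \<xi> l" \<xi>] by (simp add: reach_prob_def)

lemma sum_reach_prob_member:
  assumes "finite B" "l \<in> B"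
  shows "(\<Sum>A\<in>Pow B. if l \<in> A then reach_prob \<xi> B A else 0) = 1 - \<xi> l"
proof -
  have "(\<Sum>A\<in>Pow B. if l \<in> A then reach_prob \<xi> B A else 0) =
        (\<Sum>A\<in>Pow B. (\<Prod>x\<in>A. 1 - \<xi> x) * (\<Prod>x\<in>B - A. (\<xi>(l := 0)) x))"
  proof (rule sum.cong[OF refl])
    fix A assume "A \<in> Pow B"
    then show "(if l \<in> A then reach_prob \<xi> B A else 0) =
        (\<Prod>x\<in>A. 1 - \<xi> x) * (\<Prod>x\<in>B - A. (\<xi>(l := 0)) x)"
      using assms by (auto simp: reach_prob_def intro!: prod.cong prod_zero)
  qed
  also have "\<dots> = (\<Prod>x\<in>B. (1 - \<xi> x) + (\<xi>(l := 0)) x)"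
    using assms by (simp add: prod_add)
  also have "\<dots> = (\<Prod>x\<in>B. if x = l then 1 - \<xi> l else 1)"
    by (rule prod.cong) auto
  finally show ?thesis using assms by (simp add: prod.delta)
qed

lemma reach_prob_pos:
  assumes "finite B" "A \<subseteq> B" "\<And>l. l \<in> B \<Longrightarrow> 0 < \<xi> l \<and> \<xi> l < 1"
  shows "0 < reach_prob \<xi> B A"
  unfolding reach_prob_def using assms by (intro mult_pos_pos prod_pos) (auto dest: assms(3))

lemma sum_cond_reach_prob:
  assumes "finite B" "prod \<xi> B \<noteq> 1"
  shows "(\<Sum>A\<in>Pow B - {{}}. cond_reach_prob \<xi> B A) = 1"
proof -
  have "(\<Sum>A\<in>Pow B - {{}}. reach_prob \<xi> B A) = 1 - prod \<xi> B"
    using assms sum_reach_prob[of B \<xi>] by (simp add: sum_diff1 reach_prob_def)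
  then show ?thesis
    using assms by (simp add: cond_reach_prob_def flip: sum_divide_distrib)
qed

lemma ln_cond_reach_prob:
  assumes "finite B" "B \<noteq> {}" "A \<subseteq> B" "\<And>l. l \<in> B \<Longrightarrow> 0 < \<xi> l \<and> \<xi> l < 1"
  shows "ln (cond_reach_prob \<xi> B A) =
           (\<Sum>l\<in>B. if l \<in> A then ln (1 - \<xi> l) else ln (\<xi> l)) - ln (1 - prod \<xi> B)"
proof -
  have fA: "finite A" using assms finite_subset by blast
  have pos: "0 < \<xi> l" "0 < 1 - \<xi> l" if "l \<in> B" for l using assms(4)[OF that] by auto
  have "ln (reach_prob \<xi> B A) = ln (\<Prod>l\<in>A. 1 - \<xi> l) + ln (prod \<xi> (B - A))"
    unfolding reach_prob_def using pos assms(3) by (intro ln_mult_pos prod_pos) auto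
  also have "\<dots> = (\<Sum>l\<in>A. ln (1 - \<xi> l)) + (\<Sum>l\<in>B - A. ln (\<xi> l))"
    using pos assms(1,3) fA by (subst (1 2) ln_prod) force+
  also have "\<dots> = (\<Sum>l\<in>B. if l \<in> A then ln (1 - \<xi> l) else ln (\<xi> l))"
    using assms by (simp add: sum.If_cases Int_absorb1 Diff_eq)
  finally show ?thesis
    using assms reach_prob_pos[OF assms(1,3,4)] prod_pos_less_one[OF assms(1,2,4)]
    by (simp add: cond_reach_prob_def ln_divide_pos)
qed

lemma cond_reach_prob_pos:
  assumes "finite B" "B \<noteq> {}" "A \<subseteq> B" "\<And>l. l \<in> B \<Longrightarrow> 0 < \<xi> l \<and> \<xi> l < 1"
  shows "0 < cond_reach_prob \<xi> B A"
  using reach_prob_pos[OF assms(1,3,4)] prod_pos_less_one[OF assms(1,2,4)]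
  by (simp add: cond_reach_prob_def)

text \<open>
  The hypothesis \<open>marg\<close> says that under \<open>h\<close> the link \<open>l\<close> is seen with conditional probability
  \<open>r l\<close>, i.e. that \<open>h\<close> solves the likelihood equations of \<open>B\<close>.
\<close>

context
  fixes r h :: "'a \<Rightarrow> real" and B :: "'a set"
  assumes fin: "finite B" and ne: "B \<noteq> {}" and h: "\<And>l. l \<in> B \<Longrightarrow> 0 < h l \<and> h l < 1"
    and marg: "\<And>l. l \<in> B \<Longrightarrow> 1 - h l = r l * (1 - prod h B)"
begin

lemma group_loglik_eq_cross_entropy:
  assumes xi: "\<And>l. l \<in> B \<Longrightarrow> 0 < \<xi> l \<and> \<xi> l < 1"
  shows "group_loglik r \<xi> B =
           (\<Sum>A\<in>Pow B - {{}}. cond_reach_prob h B A * ln (cond_reach_prob \<xi> B A))"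
proof -
  define a where "a = cond_reach_prob h B"
  let ?SS = "Pow B - {{}}"
  have Ph: "0 < prod h B" "prod h B < 1" using prod_pos_less_one[OF fin ne h] by auto
  have sum_a: "(\<Sum>A\<in>?SS. a A) = 1" using sum_cond_reach_prob[OF fin] Ph by (simp add: a_def)
  have marg_a: "(\<Sum>A\<in>?SS. if l \<in> A then a A else 0) = r l" if l: "l \<in> B" for l
  proof -
    have "(\<Sum>A\<in>?SS. if l \<in> A then a A else 0) =
          (\<Sum>A\<in>Pow B. if l \<in> A then reach_prob h B A else 0) / (1 - prod h B)"
      unfolding a_def cond_reach_prob_def sum_divide_distrib using fin
      by (simp add: sum_diff1) (intro sum.cong; simp)
    also have "\<dots> = r l" using sum_reach_prob_member[OF fin l] marg[OF l] Ph by simp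
    finally show ?thesis .
  qed
  have per_link: "(\<Sum>A\<in>?SS. a A * (if l \<in> A then u else v)) = r l * u + (1 - r l) * v"
    if "l \<in> B" for l u v
  proof -
    have "(\<Sum>A\<in>?SS. a A * (if l \<in> A then u else v)) =
          (\<Sum>A\<in>?SS. (if l \<in> A then a A else 0) * (u - v) + a A * v)"
      by (rule sum.cong) (auto simp: algebra_simps)
    also have "\<dots> = r l * (u - v) + v"
      by (simp add: sum.distrib marg_a[OF that] sum_a flip: sum_distrib_right)
    finally show ?thesis by (simp add: algebra_simps)
  qed
  have "(\<Sum>A\<in>?SS. a A * ln (cond_reach_prob \<xi> B A)) =
        (\<Sum>A\<in>?SS. \<Sum>l\<in>B. a A * (if l \<in> A then ln (1 - \<xi> l) else ln (\<xi> l))) - ln (1 - prod \<xi> B)"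
    using ln_cond_reach_prob[OF fin ne _ xi] sum_a
    by (simp add: right_diff_distrib sum_subtractf sum_distrib_left flip: sum_distrib_right)
  also have "\<dots> = group_loglik r \<xi> B"
    unfolding group_loglik_def by (subst sum.swap) (simp add: per_link)
  finally show ?thesis by (simp add: a_def)
qed

lemma group_loglik_maximal:
  assumes xi: "\<And>l. l \<in> B \<Longrightarrow> 0 < \<xi> l \<and> \<xi> l < 1"
  shows "group_loglik r \<xi> B \<le> group_loglik r h B"
    and "group_loglik r \<xi> B = group_loglik r h B \<Longrightarrow> A \<subseteq> B \<Longrightarrow> A \<noteq> {} \<Longrightarrow>
           cond_reach_prob \<xi> B A = cond_reach_prob h B A"
proof -
  let ?SS = "Pow B - {{}}" and ?p = "cond_reach_prob h B" and ?q = "cond_reach_prob \<xi> B"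
  have entropy: "group_loglik r h B = (\<Sum>A\<in>?SS. ?p A * ln (?p A))"
    using h by (rule group_loglik_eq_cross_entropy)
  have cross: "group_loglik r \<xi> B = (\<Sum>A\<in>?SS. ?p A * ln (?q A))"
    using xi by (rule group_loglik_eq_cross_entropy)
  have fin_SS: "finite ?SS" using fin by simp
  have pos: "0 < ?p A" "0 < ?q A" if "A \<in> ?SS" for A
    using that by (auto intro!: cond_reach_prob_pos fin ne h xi)
  have sums: "sum ?q ?SS = sum ?p ?SS"
    using prod_pos_less_one[of B h] prod_pos_less_one[of B \<xi>] fin ne h xi
    by (simp add: sum_cond_reach_prob)
  show "group_loglik r \<xi> B \<le> group_loglik r h B"
    unfolding entropy cross using fin_SS pos sums by (rule gibbs_inequality)
  show "?q A = ?p A" if "group_loglik r \<xi> B = group_loglik r h B" "A \<subseteq> B" "A \<noteq> {}"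
    using fin_SS pos sums that(1)[unfolded entropy cross]
    by (rule gibbs_inequality_eq[symmetric]) (use that in auto)
qed

end

lemma prod_fixed_point_card_ge_2:
  fixes r :: "'a \<Rightarrow> real"
  assumes "finite B" "\<And>l. l \<in> B \<Longrightarrow> r l < 1" "x < 1" "x = (\<Prod>l\<in>B. 1 - r l + r l * x)"
  shows "2 \<le> card B"
proof (rule ccontr)
  assume "\<not> 2 \<le> card B"
  then consider "B = {}" | l where "B = {l}"
    using assms(1) by (metis One_nat_def card_0_eq card_1_singletonE less_2_cases not_le)
  then show False
  proof cases
    case 1 then show False using assms(3,4) by simp
  next
    case 2
    then have "(1 - r l) * (1 - x) = 0" using assms(4) by (simp add: algebra_simps)
    then show False using assms(2)[of l] assms(3) 2 by simp
  qed
qed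

lemma cond_reach_prob_all:
  fixes r :: "'a \<Rightarrow> real"
  assumes "B \<noteq> {}" "finite B" "z < 1" "z = (\<Prod>l\<in>B. 1 - r l + r l * z)"
  shows "cond_reach_prob (\<lambda>l. 1 - r l + r l * z) B B = prod r B * (1 - z) ^ (card B - 1)"
proof -
  have "reach_prob (\<lambda>l. 1 - r l + r l * z) B B = (\<Prod>l\<in>B. r l * (1 - z))"
    by (simp add: reach_prob_def algebra_simps)
  also have "\<dots> = prod r B * ((1 - z) * (1 - z) ^ (card B - 1))"
  proof -
    have "Suc (card B - 1) = card B" using assms(1,2) by (simp add: card_gt_0_iff)
    then show ?thesis by (simp add: prod.distrib flip: power_Suc)
  qed
  finally show ?thesis using assms(3,4) by (simp add: cond_reach_prob_def)
qed

text \<open>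
  A fixed point \<open>z\<close> yields link probabilities \<open>h z\<close> solving the likelihood equations, so two
  fixed points both maximize \<open>group_loglik r\<close>. By the equality case of Gibbs' inequality they give
  the same conditional probability \<open>\<Prod> r \<cdot> (1 - z)\<^bsup>|B| - 1\<^esup>\<close> of seeing all of \<open>B\<close>.
\<close>

lemma prod_fixed_point_unique:
  fixes r :: "'a \<Rightarrow> real"
  assumes fin: "finite B" and r: "\<And>l. l \<in> B \<Longrightarrow> 0 < r l \<and> r l < 1"
    and x: "0 < x" "x < 1" "x = (\<Prod>l\<in>B. 1 - r l + r l * x)"
    and y: "0 < y" "y < 1" "y = (\<Prod>l\<in>B. 1 - r l + r l * y)"
  shows "x = y"
proof -
  define h where "h z l = 1 - r l + r l * z" for z l
  have h_bounds: "0 < h z l \<and> h z l < 1" if "0 < z" "z < 1" "l \<in> B" for z l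
  proof -
    have "0 < r l * z" "r l * z < r l" using r[OF that(3)] that by simp_all
    then show ?thesis using r[OF that(3)] by (simp add: h_def)
  qed
  have prod_h: "prod (h x) B = x" "prod (h y) B = y" using x(3) y(3) by (simp_all add: h_def)
  have two: "2 \<le> card B" using fin r x(2,3) by (intro prod_fixed_point_card_ge_2) auto
  then have ne: "B \<noteq> {}" by auto
  have marg: "1 - h z l = r l * (1 - prod (h z) B)" if "prod (h z) B = z" for z l
    using that by (simp add: h_def algebra_simps)
  have "group_loglik r (h y) B \<le> group_loglik r (h x) B"
    using fin ne h_bounds[OF x(1,2)] marg[OF prod_h(1)] h_bounds[OF y(1,2)]
    by (rule group_loglik_maximal(1))
  moreover have "group_loglik r (h x) B \<le> group_loglik r (h y) B"
    using fin ne h_bounds[OF y(1,2)] marg[OF prod_h(2)] h_bounds[OF x(1,2)]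
    by (rule group_loglik_maximal(1))
  ultimately have "cond_reach_prob (h y) B B = cond_reach_prob (h x) B B"
    using fin ne h_bounds[OF x(1,2)] marg[OF prod_h(1)] h_bounds[OF y(1,2)]
    by (intro group_loglik_maximal(2)) auto
  then have "prod r B * (1 - y) ^ (card B - 1) = prod r B * (1 - x) ^ (card B - 1)"
    unfolding h_def using cond_reach_prob_all[OF ne fin] x(2,3) y(2,3) by simp
  then have "(1 - y) ^ (card B - 1) = (1 - x) ^ (card B - 1)"
    using prod_pos[of B r] r by force
  then have "1 - y = 1 - x"
    by (rule power_eq_imp_eq_base) (use two x(2) y(2) in auto)
  then show ?thesis by simp
qed

section \<open>Summing out the states of a tree\<close>

lemma sum_Pow_insert:
  assumes "finite V" "l \<notin> V"
  shows "(\<Sum>A\<in>Pow (insert l V). f A) = (\<Sum>A\<in>Pow V. f A + f (insert l A))"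
proof -
  have "(\<Sum>A\<in>Pow (insert l V). f A) = (\<Sum>A\<in>Pow V. f A) + (\<Sum>A\<in>insert l ` Pow V. f A)"
    unfolding Pow_insert using assms by (intro sum.union_disjoint) auto
  also have "(\<Sum>A\<in>insert l ` Pow V. f A) = (\<Sum>A\<in>Pow V. f (insert l A))"
    using assms(2) by (subst sum.reindex) (auto intro!: inj_onI simp: Pow_def)
  finally show ?thesis by (simp add: sum.distrib)
qed

lemma prod_indicator:
  "finite I \<Longrightarrow> (\<Prod>i\<in>I. if P i then 1 else 0 :: real) = (if \<forall>i\<in>I. P i then 1 else 0)"
  by (induction I rule: finite_induct) auto

lemma prod_mult_at:
  assumes "finite V" "p \<in> V"
  shows "(\<Prod>i\<in>V. if i = p then f i * c else f i) = c * prod f V"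
proof -
  have "(\<Prod>i\<in>V. if i = p then f i * c else f i) = (f p * c) * (\<Prod>i\<in>V - {p}. f i)"
    using assms by (simp add: prod.remove)
  also have "\<dots> = c * prod f V" using assms by (simp add: prod.remove algebra_simps)
  finally show ?thesis .
qed

lemma tree_subset_sum_remove_leaf:
  fixes w :: "'a \<Rightarrow> bool \<Rightarrow> bool \<Rightarrow> real"
  assumes fin: "finite V" and l: "l \<in> V - {r}" "par l \<in> V - {l}"
    and leaf: "\<And>j. j \<in> V - {r} \<Longrightarrow> par j \<noteq> l"
  defines "w' \<equiv> \<lambda>i a b. if i = par l then w i a b * (w l False a + w l True a) else w i a b"
  shows "(\<Sum>A\<in>Pow V. \<Prod>i\<in>V. w i (i \<in> A) (i = r \<or> par i \<in> A)) =
         (\<Sum>A\<in>Pow (V - {l}). \<Prod>i\<in>V - {l}. w' i (i \<in> A) (i = r \<or> par i \<in> A))"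
proof -
  define V' where "V' = V - {l}"
  define F where "F A = (\<Prod>i\<in>V. w i (i \<in> A) (i = r \<or> par i \<in> A))" for A
  have V: "V = insert l V'" "l \<notin> V'" "finite V'" using l fin by (auto simp: V'_def)
  have pl: "par l \<in> V'" using l by (simp add: V'_def)
  have key: "F A + F (insert l A) = (\<Prod>i\<in>V'. w' i (i \<in> A) (i = r \<or> par i \<in> A))"
    if "A \<subseteq> V'" for A
  proof -
    define g where "g i = w i (i \<in> A) (i = r \<or> par i \<in> A)" for i
    have "l \<notin> A" "par l \<noteq> l" using that V l by auto
    have unchanged: "w i (i \<in> insert l A) (i = r \<or> par i \<in> insert l A) = g i" if "i \<in> V'" for i
      using that leaf[of i] V(2) by (cases "i = r") (auto simp: g_def V'_def)
    have "F A = w l False (par l \<in> A) * prod g V'"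
      using V \<open>l \<notin> A\<close> l by (simp add: F_def g_def)
    moreover have "(\<Prod>i\<in>V'. w i (i \<in> insert l A) (i = r \<or> par i \<in> insert l A)) = prod g V'"
      by (rule prod.cong[OF refl]) (rule unchanged)
    then have "F (insert l A) = w l True (par l \<in> A) * prod g V'"
      using V \<open>par l \<noteq> l\<close> l by (simp add: F_def)
    ultimately have "F A + F (insert l A) = (w l False (par l \<in> A) + w l True (par l \<in> A)) * prod g V'"
      by (simp add: algebra_simps)
    also have "\<dots> = (\<Prod>i\<in>V'. if i = par l then g i * (w l False (par l \<in> A) + w l True (par l \<in> A)) else g i)"
      by (simp add: prod_mult_at[OF V(3) pl] mult.commute)
    also have "\<dots> = (\<Prod>i\<in>V'. w' i (i \<in> A) (i = r \<or> par i \<in> A))"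
      by (rule prod.cong) (auto simp: w'_def g_def)
    finally show ?thesis .
  qed
  have "(\<Sum>A\<in>Pow V. F A) = (\<Sum>A\<in>Pow V'. F A + F (insert l A))"
    using sum_Pow_insert[OF V(3,2), of F] V(1) by simp
  also have "\<dots> = (\<Sum>A\<in>Pow V'. \<Prod>i\<in>V'. w' i (i \<in> A) (i = r \<or> par i \<in> A))"
    using key by (intro sum.cong) auto
  finally show ?thesis by (simp add: F_def V'_def)
qed

lemma tree_recursion_remove_leaf:
  fixes w :: "'a \<Rightarrow> bool \<Rightarrow> bool \<Rightarrow> real" and s :: "'a \<Rightarrow> bool \<Rightarrow> real"
  assumes fin: "finite V" and l: "l \<in> V - {r}" and leaf: "\<And>j. j \<in> V - {r} \<Longrightarrow> par j \<noteq> l"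
    and rec: "\<And>i b. i \<in> V \<Longrightarrow> s i b =
            w i False b * (\<Prod>c\<in>{j \<in> V - {r}. par j = i}. s c False)
          + w i True b * (\<Prod>c\<in>{j \<in> V - {r}. par j = i}. s c True)"
    and i: "i \<in> V - {l}"
  defines "w' \<equiv> \<lambda>i a b. if i = par l then w i a b * (w l False a + w l True a) else w i a b"
  shows "s i b = w' i False b * (\<Prod>c\<in>{j \<in> V - {l} - {r}. par j = i}. s c False)
               + w' i True b * (\<Prod>c\<in>{j \<in> V - {l} - {r}. par j = i}. s c True)"
proof -
  have children: "{j \<in> V - {l} - {r}. par j = i} = {j \<in> V - {r}. par j = i} - {l}" by auto
  have no_children: "{j \<in> V - {r}. par j = l} = {}" using leaf by blast
  have s_l: "s l a = w l False a + w l True a" for a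
    using rec[of l a, unfolded no_children] l by simp
  show ?thesis
  proof (cases "i = par l")
    case True
    have "l \<in> {j \<in> V - {r}. par j = i}" using l True by simp
    then have "(\<Prod>c\<in>{j \<in> V - {r}. par j = i}. s c a) =
          s l a * (\<Prod>c\<in>{j \<in> V - {l} - {r}. par j = i}. s c a)" for a
      unfolding children using fin by (simp add: prod.remove)
    then have "s i b = w i False b * (s l False * (\<Prod>c\<in>{j \<in> V - {l} - {r}. par j = i}. s c False))
                + w i True b * (s l True * (\<Prod>c\<in>{j \<in> V - {l} - {r}. par j = i}. s c True))"
      using rec[of i b] i by simp
    then show ?thesis using True by (simp add: w'_def s_l algebra_simps)
  next
    case False
    then have "{j \<in> V - {l} - {r}. par j = i} = {j \<in> V - {r}. par j = i}"
      unfolding children by auto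
    then show ?thesis using rec[of i b] i False by (simp add: w'_def)
  qed
qed

text \<open>
  Summing a product of parent-dependent factors over all sets \<open>A\<close> of nodes in state \<open>True\<close>:
  \<open>w i a b\<close> is the factor of node \<open>i\<close> in state \<open>a\<close> when its parent is in state \<open>b\<close> (the root
  behaves as if its parent were in state \<open>True\<close>), and \<open>s\<close> is the bottom-up recursion that sums out
  the states of the children.
\<close>

lemma tree_subset_sum:
  fixes w :: "'a \<Rightarrow> bool \<Rightarrow> bool \<Rightarrow> real" and s :: "'a \<Rightarrow> bool \<Rightarrow> real"
  assumes "finite V" "r \<in> V" "\<And>j. j \<in> V - {r} \<Longrightarrow> par j \<in> V"
    and "wf R" "\<And>j. j \<in> V - {r} \<Longrightarrow> (j, par j) \<in> R"
    and "\<And>i b. i \<in> V \<Longrightarrow> s i b =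
            w i False b * (\<Prod>c\<in>{j \<in> V - {r}. par j = i}. s c False)
          + w i True b * (\<Prod>c\<in>{j \<in> V - {r}. par j = i}. s c True)"
  shows "(\<Sum>A\<in>Pow V. \<Prod>i\<in>V. w i (i \<in> A) (i = r \<or> par i \<in> A)) = s r True"
  using assms
proof (induction "card V" arbitrary: V w rule: less_induct)
  case less
  note fin = less.prems(1) and rV = less.prems(2) and parV = less.prems(3)
    and parR = less.prems(5) and rec = less.prems(6)
  show ?case
  proof (cases "V = {r}")
    case True
    then have "{j \<in> V - {r}. par j = r} = {}" "Pow V = {{}, {r}}" by auto
    then show ?thesis using rec[of r True] True by simp
  next
    case False
    then obtain l0 where "l0 \<in> V - {r}" using rV by auto
    then obtain l where l: "l \<in> V - {r}" and min: "\<And>y. (y, l) \<in> R \<Longrightarrow> y \<notin> V - {r}"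
      by (rule wfE_min[OF \<open>wf R\<close>]) blast
    have leaf: "par j \<noteq> l" if "j \<in> V - {r}" for j
      using min[of j] parR[OF that] that by auto
    have pl: "par l \<in> V - {l}" using parV[OF l] parR[OF l] \<open>wf R\<close> by auto
    let ?w' = "\<lambda>i a b. if i = par l then w i a b * (w l False a + w l True a) else w i a b"
    have "(\<Sum>A\<in>Pow V. \<Prod>i\<in>V. w i (i \<in> A) (i = r \<or> par i \<in> A)) =
          (\<Sum>A\<in>Pow (V - {l}). \<Prod>i\<in>V - {l}. ?w' i (i \<in> A) (i = r \<or> par i \<in> A))"
      by (rule tree_subset_sum_remove_leaf) (assumption | rule fin l pl leaf)+
    also have "\<dots> = s r True"
    proof (rule less.hyps)
      show "card (V - {l}) < card V" using fin l by (intro card_Diff1_less) auto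
      show "finite (V - {l})" "r \<in> V - {l}" "wf R" using fin rV l \<open>wf R\<close> by auto
      show "par j \<in> V - {l}" "(j, par j) \<in> R" if "j \<in> V - {l} - {r}" for j
        using that parV parR leaf by auto
      show "s i b = ?w' i False b * (\<Prod>c\<in>{j \<in> V - {l} - {r}. par j = i}. s c False)
                  + ?w' i True b * (\<Prod>c\<in>{j \<in> V - {l} - {r}. par j = i}. s c True)"
        if "i \<in> V - {l}" for i b
        by (rule tree_recursion_remove_leaf) (assumption | rule fin l leaf rec that)+
    qed
    finally show ?thesis .
  qed
qed

section \<open>Multicast networks\<close>

lemma wfrec_unfold:
  assumes "wf R" and "\<And>f g i. (\<And>j. (j, i) \<in> R \<Longrightarrow> f j = g j) \<Longrightarrow> F f i = F g i"
  shows "wfrec R F i = F (wfrec R F) i"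
proof -
  have "adm_wf R F" unfolding adm_wf_def using assms(2) by blast
  then show ?thesis using wfrec_fixpoint[OF assms(1)] by metis
qed

text \<open>
  For a set \<open>Y\<close> of links closed under taking parents, \<open>subtree_prob tail head \<theta> Y i\<close> is the
  probability that, for a probe at the tail of \<open>i\<close>, the links of the subtree of \<open>i\<close> through
  which some leaf is reached are exactly those in \<open>Y\<close>.
\<close>

definition Gamma :: "('e \<Rightarrow> 'v) \<Rightarrow> ('e \<Rightarrow> 'v) \<Rightarrow> ('e \<Rightarrow> real) \<Rightarrow> 'e \<Rightarrow> real" where
  "Gamma tail head \<theta> = wfrec ((child_rel tail head)\<inverse>) (\<lambda>f i.
     if is_leaf tail head i then \<theta> i else \<theta> i + (1 - \<theta> i) * (\<Prod>j\<in>children tail head i. f j))"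

definition subtree_prob ::
  "('e \<Rightarrow> 'v) \<Rightarrow> ('e \<Rightarrow> 'v) \<Rightarrow> ('e \<Rightarrow> real) \<Rightarrow> ('e \<Rightarrow> bool) \<Rightarrow> 'e \<Rightarrow> real" where
  "subtree_prob tail head \<theta> Y = wfrec ((child_rel tail head)\<inverse>) (\<lambda>f i.
     if Y i then (1 - \<theta> i) * (\<Prod>j\<in>children tail head i. f j) else Gamma tail head \<theta> i)"

lemma parents_iff_children: "p \<in> parents tail head i \<longleftrightarrow> i \<in> children tail head p"
  by (auto simp: parents_def children_def)

lemma brother_self: "i \<in> brothers tail i"
  by (simp add: brothers_def)

lemma brothers_eq: "j \<in> brothers tail i \<Longrightarrow> brothers tail j = brothers tail i"
  by (auto simp: brothers_def)

lemma parents_brother: "j \<in> brothers tail i \<Longrightarrow> parents tail head j = parents tail head i"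
  by (auto simp: parents_def brothers_def)

lemma desc_unfold: "desc tail head i = insert i (\<Union>c\<in>children tail head i. desc tail head c)"
proof
  show "desc tail head i \<subseteq> insert i (\<Union>c\<in>children tail head i. desc tail head c)"
  proof
    fix x assume "x \<in> desc tail head i"
    then have "(i, x) \<in> (child_rel tail head)\<^sup>*" by (simp add: desc_def)
    then show "x \<in> insert i (\<Union>c\<in>children tail head i. desc tail head c)"
      by (rule converse_rtranclE) (auto simp: desc_def child_rel_def)
  qed
  show "insert i (\<Union>c\<in>children tail head i. desc tail head c) \<subseteq> desc tail head i"
    by (auto simp: desc_def child_rel_def intro: converse_rtrancl_into_rtrancl)
qed

lemma desc_trans: "j \<in> desc tail head i \<Longrightarrow> desc tail head j \<subseteq> desc tail head i"
  by (auto simp: desc_def)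

lemma child_in_desc: "j \<in> children tail head i \<Longrightarrow> j \<in> desc tail head i"
  by (subst desc_unfold) (auto simp: desc_def)

lemma leaf_desc_leaf: "is_leaf tail head i \<Longrightarrow> leaf_desc tail head i = {i}"
  unfolding leaf_desc_def by (subst desc_unfold) (auto simp: is_leaf_def)

lemma leaf_desc_nonleaf:
  "\<not> is_leaf tail head i \<Longrightarrow> leaf_desc tail head i = (\<Union>c\<in>children tail head i. leaf_desc tail head c)"
  unfolding leaf_desc_def by (subst desc_unfold) auto

lemma leaf_desc_child_subset:
  assumes "j \<in> children tail head i"
  shows "leaf_desc tail head j \<subseteq> leaf_desc tail head i"
  using desc_trans[OF child_in_desc[OF assms]] unfolding leaf_desc_def by blast

lemma Gamma_inv_in_Theta:
  assumes "\<xi> \<in> Xi tail head"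
  shows "Gamma_inv tail head \<xi> \<in> Theta"
  unfolding Theta_def
proof (intro CollectI allI)
  fix i
  have \<xi>: "0 < \<xi> i" "\<xi> i < 1" using assms by (auto simp: Xi_def)
  show "0 < Gamma_inv tail head \<xi> i \<and> Gamma_inv tail head \<xi> i < 1"
  proof (cases "is_leaf tail head i")
    case False
    then have "(\<Prod>j\<in>children tail head i. \<xi> j) < \<xi> i" using assms by (auto simp: Xi_def)
    then show ?thesis using False \<xi> by (simp add: Gamma_inv_def)
  qed (use \<xi> in \<open>simp add: Gamma_inv_def\<close>)
qed

locale multicast_net =
  fixes tail head :: "'e::finite \<Rightarrow> 'v" and K :: nat and S :: "nat \<Rightarrow> 'e"
  assumes multicast: "multicast_network tail head K S"
begin

abbreviation T :: "nat \<Rightarrow> 'e set" where "T k \<equiv> tree_links tail head S k"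
abbreviation tparent_of :: "nat \<Rightarrow> 'e \<Rightarrow> 'e" where "tparent_of k \<equiv> tparent tail head S k"

lemma root_parents: "k < K \<Longrightarrow> parents tail head (S k) = {}"
  using multicast by (simp add: multicast_network_def)

lemma ex1_tree_parent: "k < K \<Longrightarrow> i \<in> T k - {S k} \<Longrightarrow> \<exists>!j. j \<in> parents tail head i \<and> j \<in> T k"
  using multicast unfolding multicast_network_def by blast

lemma ex_tree: "\<exists>k<K. i \<in> T k"
  using multicast unfolding multicast_network_def by blast

lemma wf_child_rel: "wf ((child_rel tail head)\<inverse>)"
proof -
  let ?E = "{(tail e, head e) |e. True}"
  have "(tail i, tail j) \<in> ?E\<^sup>+" if "(i, j) \<in> (child_rel tail head)\<^sup>+" for i j
    using that
  proof (induction rule: trancl_induct)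
    case (base j)
    then show ?case by (intro r_into_trancl) (auto simp: child_rel_def children_def)
  next
    case (step j k)
    then have "(tail j, tail k) \<in> ?E" by (auto simp: child_rel_def children_def)
    with step.IH show ?case by (rule trancl_into_trancl)
  qed
  moreover have "acyclic ?E" using multicast by (simp add: multicast_network_def)
  ultimately have "acyclic (child_rel tail head)" unfolding acyclic_def by blast
  then show ?thesis by (simp add: finite_acyclic_wf acyclic_converse)
qed

lemma Gamma_eq: "Gamma tail head \<theta> i = (if is_leaf tail head i then \<theta> i
    else \<theta> i + (1 - \<theta> i) * (\<Prod>j\<in>children tail head i. Gamma tail head \<theta> j))"
  unfolding Gamma_def
  by (rule wfrec_unfold[OF wf_child_rel]) (auto simp: child_rel_def intro!: prod.cong)

lemma subtree_prob_eq: "subtree_prob tail head \<theta> Y i = (if Y i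
    then (1 - \<theta> i) * (\<Prod>j\<in>children tail head i. subtree_prob tail head \<theta> Y j)
    else Gamma tail head \<theta> i)"
  unfolding subtree_prob_def
  by (rule wfrec_unfold[OF wf_child_rel]) (auto simp: child_rel_def intro!: prod.cong)

lemma Gamma_bounds:
  assumes "\<theta> \<in> Theta"
  shows "0 < Gamma tail head \<theta> i \<and> Gamma tail head \<theta> i < 1"
  using wf_child_rel
proof (induction i rule: wf_induct_rule)
  case (less i)
  have \<theta>: "0 < \<theta> i" "\<theta> i < 1" using assms by (auto simp: Theta_def)
  show ?case
  proof (cases "is_leaf tail head i")
    case False
    define P where "P = (\<Prod>j\<in>children tail head i. Gamma tail head \<theta> j)"
    have "0 < P \<and> P < 1"
      unfolding P_def using False less.IH by (intro prod_pos_less_one) (auto simp: is_leaf_def child_rel_def)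
    then have "0 < (1 - \<theta> i) * P" "(1 - \<theta> i) * P < 1 - \<theta> i" using \<theta> by auto
    moreover have "Gamma tail head \<theta> i = \<theta> i + (1 - \<theta> i) * P"
      using False by (subst Gamma_eq) (simp add: P_def)
    ultimately show ?thesis using \<theta> by linarith
  qed (use \<theta> in \<open>simp add: Gamma_eq[of \<theta> i]\<close>)
qed

lemma subtree_prob_pos:
  assumes "\<theta> \<in> Theta"
  shows "0 < subtree_prob tail head \<theta> Y i"
  using wf_child_rel
proof (induction i rule: wf_induct_rule)
  case (less i)
  have "0 < (\<Prod>j\<in>children tail head i. subtree_prob tail head \<theta> Y j)"
    using less.IH by (intro prod_pos) (auto simp: child_rel_def)
  then show ?case
    using assms Gamma_bounds[OF assms, of i] by (subst subtree_prob_eq) (auto simp: Theta_def)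
qed

lemma Gamma_Gamma_inv:
  assumes "\<xi> \<in> Xi tail head"
  shows "Gamma tail head (Gamma_inv tail head \<xi>) i = \<xi> i"
  using wf_child_rel
proof (induction i rule: wf_induct_rule)
  case (less i)
  show ?case
  proof (cases "is_leaf tail head i")
    case False
    define P where "P = (\<Prod>j\<in>children tail head i. \<xi> j)"
    have P: "P < \<xi> i" "\<xi> i < 1" using assms False by (auto simp: Xi_def P_def)
    have "(\<Prod>j\<in>children tail head i. Gamma tail head (Gamma_inv tail head \<xi>) j) = P"
      unfolding P_def using less.IH by (intro prod.cong) (auto simp: child_rel_def)
    moreover have "Gamma_inv tail head \<xi> i * (1 - P) = \<xi> i - P"
      using False P by (simp add: Gamma_inv_def P_def)
    ultimately show ?thesis
      using False by (subst Gamma_eq) (simp add: algebra_simps)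
  qed (simp add: Gamma_eq[of _ i] Gamma_inv_def)
qed

lemma root_in_tree: "S k \<in> T k"
  by (simp add: tree_links_def desc_def)

lemma tree_children_closed: "i \<in> T k \<Longrightarrow> j \<in> children tail head i \<Longrightarrow> j \<in> T k"
  using desc_trans[of i tail head "S k"] child_in_desc[of j tail head i] by (auto simp: tree_links_def)

lemma tparent:
  assumes "k < K" "i \<in> T k - {S k}"
  shows "tparent_of k i \<in> parents tail head i" "tparent_of k i \<in> T k"
  using theI'[OF ex1_tree_parent[OF assms]] by (simp_all add: tparent_def)

lemma tparent_unique:
  assumes "k < K" "i \<in> T k - {S k}" "p \<in> parents tail head i" "p \<in> T k"
  shows "p = tparent_of k i"
  unfolding tparent_def using the1_equality[OF ex1_tree_parent[OF assms(1,2)]] assms(3,4) by simp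

lemma child_of_tparent: "k < K \<Longrightarrow> i \<in> T k - {S k} \<Longrightarrow> i \<in> children tail head (tparent_of k i)"
  using tparent(1) by (simp add: parents_iff_children)

lemma tree_children:
  assumes "k < K" "i \<in> T k"
  shows "{j \<in> T k - {S k}. tparent_of k j = i} = children tail head i"
proof (intro equalityI subsetI)
  fix j assume "j \<in> {j \<in> T k - {S k}. tparent_of k j = i}"
  then show "j \<in> children tail head i" using child_of_tparent[OF assms(1)] by blast
next
  fix j assume j: "j \<in> children tail head i"
  then have "i \<in> parents tail head j" by (simp add: parents_iff_children)
  moreover from this have "j \<noteq> S k" using root_parents[OF assms(1)] by auto
  ultimately show "j \<in> {j \<in> T k - {S k}. tparent_of k j = i}"
    using tree_children_closed[OF assms(2) j] tparent_unique[OF assms(1)] assms(2) by auto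
qed

lemma tparent_of_child:
  assumes "k < K" "i \<in> T k" "c \<in> children tail head i"
  shows "tparent_of k c = i"
proof -
  have "c \<in> {j \<in> T k - {S k}. tparent_of k j = i}" using tree_children[OF assms(1,2)] assms(3) by simp
  then show ?thesis by simp
qed

lemma not_root_iff_parents: "i \<notin> roots S K \<longleftrightarrow> parents tail head i \<noteq> {}"
proof
  assume "i \<notin> roots S K"
  obtain k where k: "k < K" "i \<in> T k" using ex_tree by blast
  then have "i \<noteq> S k" using \<open>i \<notin> roots S K\<close> by (auto simp: roots_def)
  then show "parents tail head i \<noteq> {}" using tparent(1)[OF k(1)] k(2) by blast
qed (use root_parents in \<open>auto simp: roots_def\<close>)

text \<open>
  The logarithm telescopes: a reached link contributes \<open>ln (1 - \<theta> i)\<close> plus the logarithms of its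
  children's terms, and each maximal unreached link contributes \<open>ln \<Gamma>\<^sub>i\<close>.
\<close>

lemma ln_subtree_prob_root:
  assumes k: "k < K" and \<theta>: "\<theta> \<in> Theta"
    and mono: "\<And>p c. c \<in> children tail head p \<Longrightarrow> Y c \<Longrightarrow> Y p"
  shows "ln (subtree_prob tail head \<theta> Y (S k)) =
    (\<Sum>i\<in>T k. if Y i then ln (1 - \<theta> i)
              else if i = S k \<or> Y (tparent_of k i) then ln (Gamma tail head \<theta> i) else 0)"
proof -
  define \<sigma> where "\<sigma> = subtree_prob tail head \<theta> Y"
  define \<phi> where "\<phi> i = (if Y i then ln (1 - \<theta> i)
              else if i = S k \<or> Y (tparent_of k i) then ln (Gamma tail head \<theta> i) else 0)" for i
  define \<alpha> where "\<alpha> i = (if Y i then ln (\<sigma> i) else 0)" for i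
  define \<beta> where "\<beta> i = (if Y (tparent_of k i) then ln (\<sigma> i) else 0)" for i
  define \<gamma> where "\<gamma> i = (if \<not> Y i \<and> (i = S k \<or> Y (tparent_of k i)) then ln (\<sigma> i) else 0)" for i
  have \<sigma>_pos: "0 < \<sigma> i" for i using subtree_prob_pos[OF \<theta>] by (simp add: \<sigma>_def)
  have \<beta>_children: "\<beta> c = (if Y i then ln (\<sigma> c) else 0)" if "i \<in> T k" "c \<in> children tail head i" for i c
    using tparent_of_child[OF k that] by (simp add: \<beta>_def)
  have node: "\<phi> i + (\<Sum>c\<in>children tail head i. \<beta> c) = \<alpha> i + \<gamma> i" if i: "i \<in> T k" for i
  proof (cases "Y i")
    case True
    have "\<sigma> i = (1 - \<theta> i) * (\<Prod>c\<in>children tail head i. \<sigma> c)"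
      using True by (simp add: \<sigma>_def subtree_prob_eq[of \<theta> Y i])
    then have "ln (\<sigma> i) = ln (1 - \<theta> i) + (\<Sum>c\<in>children tail head i. ln (\<sigma> c))"
      using \<theta> \<sigma>_pos by (simp add: ln_mult_pos prod_pos ln_prod Theta_def less_imp_neq[symmetric])
    moreover have "(\<Sum>c\<in>children tail head i. \<beta> c) = (\<Sum>c\<in>children tail head i. ln (\<sigma> c))"
      using \<beta>_children[OF i] True by simp
    ultimately show ?thesis using True by (simp add: \<phi>_def \<alpha>_def \<gamma>_def)
  next
    case False
    then have "\<sigma> i = Gamma tail head \<theta> i" by (simp add: \<sigma>_def subtree_prob_eq[of \<theta> Y i])
    then show ?thesis using False \<beta>_children[OF i] by (simp add: \<phi>_def \<alpha>_def \<gamma>_def)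
  qed
  have "(\<Sum>i\<in>T k. \<Sum>c\<in>children tail head i. \<beta> c) = (\<Sum>i\<in>T k. \<Sum>c\<in>{j \<in> T k - {S k}. tparent_of k j = i}. \<beta> c)"
    using tree_children[OF k] by simp
  also have "\<dots> = (\<Sum>c\<in>T k - {S k}. \<beta> c)"
    by (rule sum.group) (use tparent(2)[OF k] in auto)
  finally have children_sum: "(\<Sum>i\<in>T k. \<Sum>c\<in>children tail head i. \<beta> c) = (\<Sum>c\<in>T k - {S k}. \<beta> c)" .
  have non_root: "\<beta> c = \<alpha> c + \<gamma> c" if "c \<in> T k - {S k}" for c
    using mono[OF child_of_tparent[OF k that]] that by (auto simp: \<alpha>_def \<beta>_def \<gamma>_def)
  have "(\<Sum>i\<in>T k. \<phi> i) + (\<Sum>c\<in>T k - {S k}. \<beta> c) = (\<Sum>i\<in>T k. \<alpha> i + \<gamma> i)"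
    using node by (simp add: children_sum[symmetric] sum.distrib[symmetric])
  also have "\<dots> = (\<alpha> (S k) + \<gamma> (S k)) + (\<Sum>i\<in>T k - {S k}. \<alpha> i + \<gamma> i)"
    by (rule sum.remove) (simp_all add: root_in_tree)
  also have "\<dots> = ln (\<sigma> (S k)) + (\<Sum>c\<in>T k - {S k}. \<beta> c)"
    using non_root by (simp add: \<alpha>_def \<gamma>_def)
  finally show ?thesis unfolding \<phi>_def \<sigma>_def by simp
qed

end

section \<open>The likelihood of the probe data\<close>

lemma sum_if_eq_card:
  "(\<Sum>t<(m::nat). if P t then a else 0) = real (card {t. t < m \<and> P t}) * (a :: real)"
proof -
  have "(\<Sum>t<m. if P t then a else 0) = (\<Sum>t\<in>{t \<in> {..<m}. P t}. a)"
    by (rule sum.inter_filter[symmetric]) simp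
  also have "{t \<in> {..<m}. P t} = {t. t < m \<and> P t}" by auto
  finally show ?thesis by simp
qed

locale probe_data = multicast_net tail head K S for tail head :: "'e::finite \<Rightarrow> 'v" and K S +
  fixes n :: "nat \<Rightarrow> nat" and obs :: "nat \<Rightarrow> nat \<Rightarrow> 'e set"
  assumes obs_leaves: "\<forall>k<K. \<forall>t<n k. obs k t \<subseteq> {r \<in> tree_links tail head S k. is_leaf tail head r}"
begin

abbreviation N1k :: "nat \<Rightarrow> 'e \<Rightarrow> nat" where "N1k k \<equiv> nk1 tail head S n obs k"
abbreviation N0k :: "nat \<Rightarrow> 'e \<Rightarrow> nat" where "N0k k \<equiv> nk0 tail head S n obs k"
abbreviation N1 :: "'e \<Rightarrow> nat" where "N1 \<equiv> n1 tail head K S n obs"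
abbreviation N0 :: "'e \<Rightarrow> nat" where "N0 \<equiv> n0 tail head K S n obs"

definition reached :: "nat \<Rightarrow> nat \<Rightarrow> 'e \<Rightarrow> bool" where
  "reached k t i \<longleftrightarrow> (\<exists>r\<in>leaf_desc tail head i. r \<in> obs k t)"

lemma reached_parent: "c \<in> children tail head p \<Longrightarrow> reached k t c \<Longrightarrow> reached k t p"
  using leaf_desc_child_subset[of c tail head p] unfolding reached_def by blast

lemma reached_leaf: "is_leaf tail head i \<Longrightarrow> reached k t i \<longleftrightarrow> i \<in> obs k t"
  by (simp add: reached_def leaf_desc_leaf)

lemma reached_nonleaf:
  "\<not> is_leaf tail head i \<Longrightarrow> reached k t i \<longleftrightarrow> (\<exists>c\<in>children tail head i. reached k t c)"
  by (simp add: reached_def leaf_desc_nonleaf)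

lemma nk1_eq_card: "i \<in> T k \<Longrightarrow> N1k k i = card {t. t < n k \<and> reached k t i}"
  by (simp add: nk1_def reached_def)

lemma nk1_outside: "i \<notin> T k \<Longrightarrow> N1k k i = 0"
  by (simp add: nk1_def)

lemma nk0_outside: "i \<notin> T k \<Longrightarrow> N0k k i = 0"
  by (simp add: nk0_def)

lemma reached_subset_tparent:
  assumes "k < K" "i \<in> T k - {S k}"
  shows "{t. t < n k \<and> reached k t i} \<subseteq> {t. t < n k \<and> reached k t (tparent_of k i)}"
  using reached_parent[OF child_of_tparent[OF assms]] by blast

lemma nk1_add_nk0:
  assumes k: "k < K" and j: "parents tail head j \<noteq> {}"
  shows "N1k k j + N0k k j = (\<Sum>p\<in>parents tail head j. N1k k p)"
proof (cases "j \<in> T k")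
  case True
  have jS: "j \<in> T k - {S k}" using True j root_parents[OF k] by auto
  define q where "q = tparent_of k j"
  have q: "q \<in> parents tail head j" "q \<in> T k" using tparent[OF k jS] by (auto simp: q_def)
  have "N1k k j \<le> N1k k q"
    using reached_subset_tparent[OF k jS] True q by (simp add: nk1_eq_card card_mono q_def)
  then have "N1k k j + N0k k j = N1k k q"
    using True jS by (simp add: nk0_def q_def)
  also have "\<dots> = (\<Sum>p\<in>parents tail head j. N1k k p)"
  proof -
    have "N1k k p = 0" if "p \<in> parents tail head j - {q}" for p
    proof -
      have "p \<notin> T k" using that tparent_unique[OF k jS, of p] by (auto simp: q_def)
      then show ?thesis by (rule nk1_outside)
    qed
    then show ?thesis using q(1) by (simp add: sum.remove)
  qed
  finally show ?thesis .
next
  case False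
  then have "p \<notin> T k" if "p \<in> parents tail head j" for p
    using that tree_children_closed[of p k j] by (auto simp: parents_iff_children)
  then show ?thesis using False by (simp add: nk1_outside nk0_outside)
qed

lemma n1_add_n0:
  assumes "parents tail head j \<noteq> {}"
  shows "N1 j + N0 j = (\<Sum>p\<in>parents tail head j. N1 p)"
proof -
  have "N1 j + N0 j = (\<Sum>k<K. N1k k j + N0k k j)"
    by (simp add: n1_def n0_def sum.distrib)
  also have "\<dots> = (\<Sum>k<K. \<Sum>p\<in>parents tail head j. N1k k p)"
    using nk1_add_nk0[OF _ assms] by simp
  also have "\<dots> = (\<Sum>p\<in>parents tail head j. N1 p)"
    by (subst sum.swap) (simp add: n1_def)
  finally show ?thesis .
qed

text \<open>
  The factor of link \<open>i\<close> in the probability of a pattern of reached links, given whether the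
  head of \<open>i\<close> (\<open>a\<close>) and its tail (\<open>b\<close>) are reached; at leaves the pattern is forced to match \<open>Ob\<close>.
\<close>

definition probe_weight :: "('e \<Rightarrow> real) \<Rightarrow> 'e set \<Rightarrow> 'e \<Rightarrow> bool \<Rightarrow> bool \<Rightarrow> real" where
  "probe_weight \<theta> Ob i a b =
     (if b then (if a then 1 - \<theta> i else \<theta> i) else (if a then 0 else 1)) *
     (if is_leaf tail head i \<and> a \<noteq> (i \<in> Ob) then 0 else 1)"

lemma obs_prob_eq_sum_Pow:
  assumes Ob: "Ob \<subseteq> {r \<in> T k. is_leaf tail head r}"
  shows "obs_prob tail head S \<theta> k Ob =
    (\<Sum>A\<in>Pow (T k). \<Prod>i\<in>T k. probe_weight \<theta> Ob i (i \<in> A) (i = S k \<or> tparent_of k i \<in> A))"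
proof -
  have weights: "(\<Prod>i\<in>T k. probe_weight \<theta> Ob i (i \<in> A) (i = S k \<or> tparent_of k i \<in> A)) =
        (if {r \<in> A. is_leaf tail head r} = Ob then (\<Prod>i\<in>T k. link_factor tail head S \<theta> k A i) else 0)"
    if A: "A \<subseteq> T k" for A
  proof -
    have "(\<Prod>i\<in>T k. probe_weight \<theta> Ob i (i \<in> A) (i = S k \<or> tparent_of k i \<in> A)) =
          (\<Prod>i\<in>T k. link_factor tail head S \<theta> k A i) *
          (\<Prod>i\<in>T k. if is_leaf tail head i \<longrightarrow> (i \<in> A \<longleftrightarrow> i \<in> Ob) then 1 else 0)"
      unfolding prod.distrib[symmetric] by (intro prod.cong) (auto simp: probe_weight_def link_factor_def)
    moreover have "(\<forall>i\<in>T k. is_leaf tail head i \<longrightarrow> (i \<in> A \<longleftrightarrow> i \<in> Ob)) \<longleftrightarrow> {r \<in> A. is_leaf tail head r} = Ob"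
      using A Ob by blast
    ultimately show ?thesis by (simp add: prod_indicator)
  qed
  have "obs_prob tail head S \<theta> k Ob =
        (\<Sum>A\<in>Pow (T k). if {r \<in> A. is_leaf tail head r} = Ob then \<Prod>i\<in>T k. link_factor tail head S \<theta> k A i else 0)"
    unfolding obs_prob_def by (subst sum.inter_filter[symmetric]) (auto intro: sum.cong)
  also have "\<dots> = (\<Sum>A\<in>Pow (T k). \<Prod>i\<in>T k. probe_weight \<theta> Ob i (i \<in> A) (i = S k \<or> tparent_of k i \<in> A))"
    using weights by (intro sum.cong) auto
  finally show ?thesis .
qed

definition subtree_prob_at :: "('e \<Rightarrow> real) \<Rightarrow> nat \<Rightarrow> nat \<Rightarrow> 'e \<Rightarrow> bool \<Rightarrow> real" where
  "subtree_prob_at \<theta> k t i b =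
     (if b then subtree_prob tail head \<theta> (reached k t) i else if reached k t i then 0 else 1)"

lemma subtree_prob_at_recursion:
  "subtree_prob_at \<theta> k t i b =
     probe_weight \<theta> (obs k t) i False b * (\<Prod>c\<in>children tail head i. subtree_prob_at \<theta> k t c False)
   + probe_weight \<theta> (obs k t) i True b * (\<Prod>c\<in>children tail head i. subtree_prob_at \<theta> k t c True)"
proof -
  define C where "C = children tail head i"
  define \<sigma> where "\<sigma> = subtree_prob tail head \<theta> (reached k t)"
  have none_reached: "(\<Prod>c\<in>C. subtree_prob_at \<theta> k t c False) = (if \<exists>c\<in>C. reached k t c then 0 else 1)"
    using prod_indicator[of C "\<lambda>c. \<not> reached k t c"] by (simp add: subtree_prob_at_def if_distrib)
  have \<sigma>_C: "(\<Prod>c\<in>C. subtree_prob_at \<theta> k t c True) = (\<Prod>c\<in>C. \<sigma> c)"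
    by (simp add: subtree_prob_at_def \<sigma>_def)
  show ?thesis
  proof (cases "is_leaf tail head i")
    case True
    then show ?thesis
      using reached_leaf[OF True] by (simp add: C_def is_leaf_def subtree_prob_at_def probe_weight_def
          subtree_prob_eq[of \<theta> _ i] Gamma_eq[of \<theta> i])
  next
    case False
    show ?thesis
    proof (cases "reached k t i")
      case True
      then show ?thesis using False reached_nonleaf[OF False] none_reached \<sigma>_C
        by (simp add: C_def subtree_prob_at_def probe_weight_def \<sigma>_def subtree_prob_eq[of \<theta> _ i])
    next
      case not_reached: False
      then have "\<sigma> c = Gamma tail head \<theta> c" if "c \<in> C" for c
        using that reached_nonleaf[OF False] by (simp add: C_def \<sigma>_def subtree_prob_eq[of \<theta> _ c])
      then show ?thesis using False not_reached reached_nonleaf[OF False] none_reached \<sigma>_C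
        by (simp add: C_def subtree_prob_at_def probe_weight_def \<sigma>_def subtree_prob_eq[of \<theta> _ i]
            Gamma_eq[of \<theta> i])
    qed
  qed
qed

lemma obs_prob_eq_subtree_prob:
  assumes k: "k < K" and t: "t < n k"
  shows "obs_prob tail head S \<theta> k (obs k t) = subtree_prob tail head \<theta> (reached k t) (S k)"
proof -
  have "(\<Sum>A\<in>Pow (T k). \<Prod>i\<in>T k. probe_weight \<theta> (obs k t) i (i \<in> A) (i = S k \<or> tparent_of k i \<in> A)) =
        subtree_prob_at \<theta> k t (S k) True"
  proof (rule tree_subset_sum[OF finite root_in_tree _ wf_child_rel])
    show "tparent_of k j \<in> T k" "(j, tparent_of k j) \<in> (child_rel tail head)\<inverse>"
      if "j \<in> T k - {S k}" for j
      using tparent(2)[OF k that] child_of_tparent[OF k that] by (auto simp: child_rel_def)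
    show "subtree_prob_at \<theta> k t i b =
        probe_weight \<theta> (obs k t) i False b * (\<Prod>c\<in>{j \<in> T k - {S k}. tparent_of k j = i}. subtree_prob_at \<theta> k t c False)
      + probe_weight \<theta> (obs k t) i True b * (\<Prod>c\<in>{j \<in> T k - {S k}. tparent_of k j = i}. subtree_prob_at \<theta> k t c True)"
      if "i \<in> T k" for i b
      unfolding tree_children[OF k that] by (rule subtree_prob_at_recursion)
  qed
  then show ?thesis using obs_leaves k t by (simp add: obs_prob_eq_sum_Pow subtree_prob_at_def)
qed

lemma nk0_eq_card:
  assumes k: "k < K" and i: "i \<in> T k"
  shows "N0k k i = card {t. t < n k \<and> \<not> reached k t i \<and> (i = S k \<or> reached k t (tparent_of k i))}"
proof (cases "i = S k")
  case True
  have "{t. t < n k \<and> \<not> reached k t i \<and> (i = S k \<or> reached k t (tparent_of k i))} =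
        {..<n k} - {t. t < n k \<and> reached k t i}" using True by auto
  moreover have "card ({..<n k} - {t. t < n k \<and> reached k t i}) = n k - card {t. t < n k \<and> reached k t i}"
    by (subst card_Diff_subset) auto
  ultimately show ?thesis using True i by (simp add: nk0_def nk1_eq_card)
next
  case False
  then have iT: "i \<in> T k - {S k}" using i by simp
  have "{t. t < n k \<and> \<not> reached k t i \<and> (i = S k \<or> reached k t (tparent_of k i))} =
        {t. t < n k \<and> reached k t (tparent_of k i)} - {t. t < n k \<and> reached k t i}"
    using False by auto
  then show ?thesis
    using False i tparent(2)[OF k iT] reached_subset_tparent[OF k iT]
    by (simp add: nk0_def nk1_eq_card card_Diff_subset)
qed

lemma loglik_eq:
  assumes \<theta>: "\<theta> \<in> Theta"
  shows "loglik tail head K S n obs \<theta> =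
    (\<Sum>i\<in>UNIV. real (N1 i) * ln (1 - \<theta> i) + real (N0 i) * ln (Gamma tail head \<theta> i))"
proof -
  define a where "a i = ln (1 - \<theta> i)" for i
  define b where "b i = ln (Gamma tail head \<theta> i)" for i
  have tree: "(\<Sum>t<n k. ln (obs_prob tail head S \<theta> k (obs k t))) =
      (\<Sum>i\<in>UNIV. real (N1k k i) * a i + real (N0k k i) * b i)" if k: "k < K" for k
  proof -
    have "(\<Sum>t<n k. ln (obs_prob tail head S \<theta> k (obs k t))) =
          (\<Sum>t<n k. \<Sum>i\<in>T k. (if reached k t i then a i else 0) +
             (if \<not> reached k t i \<and> (i = S k \<or> reached k t (tparent_of k i)) then b i else 0))"
      using ln_subtree_prob_root[OF k \<theta> reached_parent]
      by (intro sum.cong) (auto simp: obs_prob_eq_subtree_prob[OF k] a_def b_def intro!: sum.cong)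
    also have "\<dots> = (\<Sum>i\<in>T k. real (N1k k i) * a i + real (N0k k i) * b i)"
      by (subst sum.swap) (simp add: sum.distrib sum_if_eq_card nk1_eq_card nk0_eq_card[OF k])
    also have "\<dots> = (\<Sum>i\<in>UNIV. real (N1k k i) * a i + real (N0k k i) * b i)"
      by (rule sum.mono_neutral_left) (auto simp: nk1_outside nk0_outside)
    finally show ?thesis .
  qed
  have "loglik tail head K S n obs \<theta> =
        (\<Sum>i\<in>UNIV. \<Sum>k<K. real (N1k k i) * a i + real (N0k k i) * b i)"
    unfolding loglik_def by (simp add: tree sum.swap[of _ UNIV])
  also have "\<dots> = (\<Sum>i\<in>UNIV. real (N1 i) * a i + real (N0 i) * b i)"
    by (simp add: n1_def n0_def sum.distrib sum_distrib_right)
  finally show ?thesis by (simp add: a_def b_def)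
qed

abbreviation rates :: "'e \<Rightarrow> real" where "rates \<equiv> rate tail head K S n obs"

definition xi_loglik :: "('e \<Rightarrow> real) \<Rightarrow> real" where
  "xi_loglik \<xi> = (\<Sum>i\<in>UNIV. real (N1 i) * ln (1 - \<xi> i) + real (N0 i) * ln (\<xi> i)
      - real (N1 i) * ln (1 - (\<Prod>j\<in>children tail head i. \<xi> j)))"

definition node_loglik :: "('e \<Rightarrow> real) \<Rightarrow> 'v \<Rightarrow> real" where
  "node_loglik \<xi> v = (\<Sum>j\<in>{j. tail j = v}. real (N1 j) * ln (1 - \<xi> j) + real (N0 j) * ln (\<xi> j))
      - (\<Sum>i\<in>{i. head i = v}. real (N1 i)) * ln (1 - (\<Prod>j\<in>{j. tail j = v}. \<xi> j))"

lemma loglik_eq_xi_loglik: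
  assumes \<theta>: "\<theta> \<in> Theta"
  shows "loglik tail head K S n obs \<theta> = xi_loglik (Gamma tail head \<theta>)"
  unfolding loglik_eq[OF \<theta>] xi_loglik_def
proof (rule sum.cong[OF refl])
  fix i
  define P where "P = (\<Prod>j\<in>children tail head i. Gamma tail head \<theta> j)"
  have "ln (1 - \<theta> i) = ln (1 - Gamma tail head \<theta> i) - ln (1 - P)"
  proof (cases "is_leaf tail head i")
    case False
    then have "0 < P \<and> P < 1"
      unfolding P_def using Gamma_bounds[OF \<theta>] by (intro prod_pos_less_one) (auto simp: is_leaf_def)
    moreover have "1 - Gamma tail head \<theta> i = (1 - \<theta> i) * (1 - P)"
      using False by (subst Gamma_eq) (simp add: P_def algebra_simps)
    ultimately show ?thesis using \<theta> by (simp add: ln_mult_pos Theta_def)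
  qed (simp add: P_def Gamma_eq[of \<theta> i] is_leaf_def)
  then show "real (N1 i) * ln (1 - \<theta> i) + real (N0 i) * ln (Gamma tail head \<theta> i) =
      real (N1 i) * ln (1 - Gamma tail head \<theta> i) + real (N0 i) * ln (Gamma tail head \<theta> i) -
      real (N1 i) * ln (1 - P)"
    by (simp add: right_diff_distrib)
qed

lemma xi_loglik_eq_sum_nodes: "xi_loglik \<xi> = (\<Sum>v\<in>range tail \<union> range head. node_loglik \<xi> v)"
proof -
  define V where "V = range tail \<union> range head"
  have group: "(\<Sum>i\<in>UNIV. f i) = (\<Sum>v\<in>V. \<Sum>i\<in>{i. g i = v}. f i)"
    if "range g \<subseteq> V" for f :: "'e \<Rightarrow> real" and g
    using sum.group[of UNIV V g f] that by (simp add: V_def)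
  have "(\<Sum>i\<in>UNIV. real (N1 i) * ln (1 - (\<Prod>j\<in>children tail head i. \<xi> j))) =
        (\<Sum>v\<in>V. \<Sum>i\<in>{i. head i = v}. real (N1 i) * ln (1 - (\<Prod>j\<in>children tail head i. \<xi> j)))"
    by (rule group) (simp add: V_def)
  also have "\<dots> = (\<Sum>v\<in>V. \<Sum>i\<in>{i. head i = v}. real (N1 i) * ln (1 - (\<Prod>j\<in>{j. tail j = v}. \<xi> j)))"
    by (intro sum.cong) (auto simp: children_def)
  finally have heads: "(\<Sum>i\<in>UNIV. real (N1 i) * ln (1 - (\<Prod>j\<in>children tail head i. \<xi> j))) =
        (\<Sum>v\<in>V. \<Sum>i\<in>{i. head i = v}. real (N1 i) * ln (1 - (\<Prod>j\<in>{j. tail j = v}. \<xi> j)))" .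
  have tails:  "(\<Sum>j\<in>UNIV. real (N1 j) * ln (1 - \<xi> j) + real (N0 j) * ln (\<xi> j)) =
        (\<Sum>v\<in>V. \<Sum>j\<in>{j. tail j = v}. real (N1 j) * ln (1 - \<xi> j) + real (N0 j) * ln (\<xi> j))"
    by (rule group) (simp add: V_def)
  show ?thesis
    unfolding xi_loglik_def node_loglik_def V_def[symmetric] sum_subtractf heads tails
    by (simp add: sum_subtractf sum_distrib_right)
qed

lemma node_loglik_eq_group_loglik:
  assumes "{i. head i = v} \<noteq> {}"
  shows "node_loglik g v = (\<Sum>i\<in>{i. head i = v}. real (N1 i)) * group_loglik rates g {j. tail j = v}"
proof -
  define M where "M = (\<Sum>i\<in>{i. head i = v}. real (N1 i))"
  have link: "real (N1 j) * ln (1 - g j) + real (N0 j) * ln (g j) =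
              M * (rates j * ln (1 - g j) + (1 - rates j) * ln (g j))" if "tail j = v" for j
  proof -
    have "parents tail head j = {i. head i = v}" using that by (auto simp: parents_def)
    then have "M = real (N1 j) + real (N0 j)"
      using n1_add_n0[of j] assms unfolding M_def by (metis of_nat_add of_nat_sum)
    then have "M * rates j = real (N1 j)" "M * (1 - rates j) = real (N0 j)"
      by (cases "M = 0"; simp add: rate_def field_simps)+
    moreover have "M * (rates j * ln (1 - g j) + (1 - rates j) * ln (g j)) =
        (M * rates j) * ln (1 - g j) + (M * (1 - rates j)) * ln (g j)"
      by (simp add: algebra_simps)
    ultimately show ?thesis by simp
  qed
  have "(\<Sum>j\<in>{j. tail j = v}. real (N1 j) * ln (1 - g j) + real (N0 j) * ln (g j)) =
        M * (\<Sum>j\<in>{j. tail j = v}. rates j * ln (1 - g j) + (1 - rates j) * ln (g j))"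
    unfolding sum_distrib_left by (rule sum.cong) (simp_all add: link)
  then show ?thesis
    by (simp add: node_loglik_def group_loglik_def M_def right_diff_distrib)
qed

lemma node_loglik_le:
  assumes pos: "\<And>i. N1 i > 0 \<and> N0 i > 0"
    and \<xi>: "\<And>i. 0 < \<xi> i \<and> \<xi> i < 1" and \<xi>h: "\<And>i. 0 < \<xi>h i \<and> \<xi>h i < 1"
    and root: "\<And>j. parents tail head j = {} \<Longrightarrow> \<xi>h j = 1 - rates j"
    and non_root: "\<And>j. parents tail head j \<noteq> {} \<Longrightarrow>
                     1 - \<xi>h j = rates j * (1 - (\<Prod>l\<in>brothers tail j. \<xi>h l))"
  shows "node_loglik \<xi> v \<le> node_loglik \<xi>h v"
proof -
  define B where "B = {j. tail j = v}"
  have parents: "parents tail head j = {i. head i = v}" if "j \<in> B" for j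
    using that by (auto simp: parents_def B_def)
  show ?thesis
  proof (cases "{i. head i = v} = {}")
    case True
    define A where "A g j = real (N1 j) * ln (1 - g j) + real (N0 j) * ln (g j)" for g :: "'e \<Rightarrow> real" and j
    have "A \<xi> j \<le> A \<xi>h j" if "j \<in> B" for j
    proof -
      have "\<xi>h j = 1 - rates j" using parents[OF that] True by (intro root) simp
      then have "\<xi>h j = real (N0 j) / (real (N1 j) + real (N0 j))"
        using pos[of j] by (simp add: rate_def field_simps)
      moreover have "1 - \<xi>h j = real (N1 j) / (real (N1 j) + real (N0 j))"
        using calculation pos[of j] by (simp add: field_simps)
      ultimately show ?thesis
        using binomial_loglik_le[of "real (N1 j)" "real (N0 j)" "\<xi> j"] pos[of j] \<xi>[of j]
        by (simp add: A_def add.commute)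
    qed
    then have "(\<Sum>j\<in>B. A \<xi> j) \<le> (\<Sum>j\<in>B. A \<xi>h j)" by (rule sum_mono)
    then show ?thesis using True by (simp add: node_loglik_def A_def B_def)
  next
    case False
    show ?thesis
    proof (cases "B = {}")
      case B_ne: False
      have "group_loglik rates \<xi> B \<le> group_loglik rates \<xi>h B"
      proof (rule group_loglik_maximal(1))
        show "finite B" "B \<noteq> {}" by (simp_all add: B_ne)
        show "0 < \<xi>h l \<and> \<xi>h l < 1" "0 < \<xi> l \<and> \<xi> l < 1" for l by (fact \<xi>h \<xi>)+
        show "1 - \<xi>h l = rates l * (1 - prod \<xi>h B)" if "l \<in> B" for l
          using non_root[of l] parents[OF that] False that by (simp add: brothers_def B_def)
      qed
      then show ?thesis
        unfolding node_loglik_eq_group_loglik[OF False] B_def by (simp add: mult_left_mono sum_nonneg)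
    qed (simp add: node_loglik_def B_def)
  qed
qed

lemma xi_loglik_le:
  assumes "\<And>i. N1 i > 0 \<and> N0 i > 0"
    and "\<And>i. 0 < \<xi> i \<and> \<xi> i < 1" and "\<And>i. 0 < \<xi>h i \<and> \<xi>h i < 1"
    and "\<And>j. parents tail head j = {} \<Longrightarrow> \<xi>h j = 1 - rates j"
    and "\<And>j. parents tail head j \<noteq> {} \<Longrightarrow>
           1 - \<xi>h j = rates j * (1 - (\<Prod>l\<in>brothers tail j. \<xi>h l))"
  shows "xi_loglik \<xi> \<le> xi_loglik \<xi>h"
  unfolding xi_loglik_eq_sum_nodes using assms by (intro sum_mono node_loglik_le)

end

section \<open>The maximum likelihood estimate\<close>

locale regular_probe_data = probe_data tail head K S n obs
  for tail head :: "'e::finite \<Rightarrow> 'v" and K S n obs +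
  assumes counts_pos: "\<forall>i. n1 tail head K S n obs i > 0 \<and> n0 tail head K S n obs i > 0"
    and parents_lt_brothers: "\<forall>i. i \<notin> roots S K \<longrightarrow>
       (\<Sum>j\<in>parents tail head i. n1 tail head K S n obs j) < (\<Sum>j\<in>brothers tail i. n1 tail head K S n obs j)"
begin

definition pi_hat :: "'e \<Rightarrow> real" where
  "pi_hat = (\<lambda>i. THE x. 0 < x \<and> x < 1 \<and> x = (\<Prod>j\<in>brothers tail i. (1 - rates j) + rates j * x))"

definition xi_hat :: "'e \<Rightarrow> real" where
  "xi_hat = (\<lambda>i. if i \<in> roots S K then 1 - rates i else (1 - rates i) + rates i * pi_hat i)"

lemma rates_bounds: "0 < rates i \<and> rates i < 1"
proof -
  have "0 < real (N1 i)" "0 < real (N0 i)" using counts_pos by auto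
  then show ?thesis by (simp add: rate_def)
qed

lemma not_root_brother: "i \<notin> roots S K \<Longrightarrow> j \<in> brothers tail i \<Longrightarrow> j \<notin> roots S K"
  using not_root_iff_parents parents_brother[of j tail i head] by simp

lemma sum_rates_brothers_gt_1:
  assumes i: "i \<notin> roots S K"
  shows "sum rates (brothers tail i) > 1"
proof -
  define M where "M = (\<Sum>p\<in>parents tail head i. N1 p)"
  have M: "N1 l + N0 l = M" if "l \<in> brothers tail i" for l
    using n1_add_n0[of l] parents_brother[OF that, of head] i not_root_iff_parents by (simp add: M_def)
  have "0 < M" using M[OF brother_self] counts_pos by (metis add_pos_pos)
  have "sum rates (brothers tail i) = real (\<Sum>l\<in>brothers tail i. N1 l) / real M"
    by (simp add: rate_def M sum_divide_distrib)
  also have "\<dots> > 1"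
  proof -
    have "M < (\<Sum>l\<in>brothers tail i. N1 l)" using parents_lt_brothers i by (simp add: M_def)
    then have "real M < real (\<Sum>l\<in>brothers tail i. N1 l)" by (simp only: of_nat_less_iff)
    then show ?thesis using \<open>0 < M\<close> by simp
  qed
  finally show ?thesis .
qed

lemma ex1_brother_fixed_point:
  assumes "i \<notin> roots S K"
  shows "\<exists>!x. 0 < x \<and> x < 1 \<and> x = (\<Prod>j\<in>brothers tail i. (1 - rates j) + rates j * x)"
proof -
  obtain x where x: "0 < x \<and> x < 1 \<and> x = (\<Prod>j\<in>brothers tail i. (1 - rates j) + rates j * x)"
    using prod_fixed_point_exists[of "brothers tail i" rates] rates_bounds sum_rates_brothers_gt_1[OF assms]
    by auto
  moreover have "y = x" if "0 < y \<and> y < 1 \<and> y = (\<Prod>j\<in>brothers tail i. (1 - rates j) + rates j * y)" for y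
    using prod_fixed_point_unique[of "brothers tail i" rates y x] rates_bounds x that by auto
  ultimately show ?thesis by blast
qed

lemma pi_hat:
  assumes "i \<notin> roots S K"
  shows "0 < pi_hat i \<and> pi_hat i < 1 \<and> pi_hat i = (\<Prod>j\<in>brothers tail i. (1 - rates j) + rates j * pi_hat i)"
  unfolding pi_hat_def by (rule theI'[OF ex1_brother_fixed_point[OF assms]])

lemma fixed_point_eq_pi_hat:
  assumes "i \<notin> roots S K" "0 < x" "x < 1" "x = (\<Prod>j\<in>brothers tail i. (1 - rates j) + rates j * x)"
  shows "x = pi_hat i"
  using prod_fixed_point_unique[of "brothers tail i" rates x "pi_hat i"] rates_bounds assms pi_hat[OF assms(1)]
  by auto

lemma prod_xi_hat_brothers:
  assumes i: "i \<notin> roots S K"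
  shows "(\<Prod>j\<in>brothers tail i. xi_hat j) = pi_hat i"
proof -
  have "xi_hat j = (1 - rates j) + rates j * pi_hat i" if "j \<in> brothers tail i" for j
    using not_root_brother[OF i that] brothers_eq[OF that] by (simp add: xi_hat_def pi_hat_def)
  then show ?thesis using pi_hat[OF i] by simp
qed

lemma xi_hat_bounds: "0 < xi_hat i \<and> xi_hat i < 1"
proof (cases "i \<in> roots S K")
  case False
  have "0 < rates i * (1 - pi_hat i)" "rates i * (1 - pi_hat i) < 1 - pi_hat i"
    using rates_bounds[of i] pi_hat[OF False] by simp_all
  then show ?thesis using False pi_hat[OF False] by (simp add: xi_hat_def algebra_simps)
qed (use rates_bounds in \<open>simp add: xi_hat_def\<close>)

lemma xi_hat_eq:
  "xi_hat i = (1 - rates i) + rates i * (if i \<notin> roots S K then 1 else 0) * (\<Prod>j\<in>brothers tail i. xi_hat j)"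
proof (cases "i \<in> roots S K")
  case False
  then have "xi_hat i = (1 - rates i) + rates i * pi_hat i" by (simp add: xi_hat_def)
  with False prod_xi_hat_brothers[OF False] show ?thesis by simp
qed (simp add: xi_hat_def)

lemma xi_hat_unique:
  assumes bounds: "\<forall>i. 0 < \<xi> i \<and> \<xi> i < 1"
    and eq: "\<forall>i. \<xi> i = (1 - rates i) + rates i * (if i \<notin> roots S K then 1 else 0) * (\<Prod>j\<in>brothers tail i. \<xi> j)"
  shows "\<xi> = xi_hat"
proof
  fix i
  show "\<xi> i = xi_hat i"
  proof (cases "i \<in> roots S K")
    case False
    define x where "x = (\<Prod>j\<in>brothers tail i. \<xi> j)"
    have "0 < x \<and> x < 1" unfolding x_def using bounds brother_self[of i tail]
      by (intro prod_pos_less_one) auto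
    moreover have "x = (\<Prod>j\<in>brothers tail i. (1 - rates j) + rates j * x)"
      unfolding x_def
    proof (rule prod.cong[OF refl])
      fix j assume j: "j \<in> brothers tail i"
      have "\<xi> j = (1 - rates j) + rates j * (if j \<notin> roots S K then 1 else 0) * (\<Prod>l\<in>brothers tail j. \<xi> l)"
        using eq by blast
      then show "\<xi> j = (1 - rates j) + rates j * (\<Prod>j\<in>brothers tail i. \<xi> j)"
        by (simp only: if_P[OF not_root_brother[OF False j]] mult_1_right brothers_eq[OF j])
    qed
    ultimately have "x = pi_hat i" using fixed_point_eq_pi_hat[OF False] by blast
    then show ?thesis using eq[rule_format, of i] False by (simp add: xi_hat_def x_def)
  qed (use eq[rule_format, of i] in \<open>simp add: xi_hat_def\<close>)
qed

lemma ex1_xi_solution: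
  "\<exists>!\<xi>. (\<forall>i. 0 < \<xi> i \<and> \<xi> i < 1) \<and>
      (\<forall>i. \<xi> i = (1 - rates i) + rates i * (if i \<notin> roots S K then 1 else 0) * (\<Prod>j\<in>brothers tail i. \<xi> j))"
proof (rule ex1I[of _ xi_hat])
  show "(\<forall>i. 0 < xi_hat i \<and> xi_hat i < 1) \<and> (\<forall>i. xi_hat i =
      (1 - rates i) + rates i * (if i \<notin> roots S K then 1 else 0) * (\<Prod>j\<in>brothers tail i. xi_hat j))"
    using xi_hat_bounds xi_hat_eq by blast
qed (use xi_hat_unique in blast)

lemma Gamma_inv_xi_hat_is_MLE:
  assumes X: "xi_hat \<in> Xi tail head"
  shows "Gamma_inv tail head xi_hat \<in> Theta \<and> is_MLE tail head K S n obs (Gamma_inv tail head xi_hat)"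
proof -
  have \<theta>h: "Gamma_inv tail head xi_hat \<in> Theta" by (rule Gamma_inv_in_Theta[OF X])
  have Gamma_\<theta>h: "Gamma tail head (Gamma_inv tail head xi_hat) = xi_hat"
    using Gamma_Gamma_inv[OF X] by (rule ext)
  have "loglik tail head K S n obs \<theta> \<le> loglik tail head K S n obs (Gamma_inv tail head xi_hat)"
    if \<theta>: "\<theta> \<in> Theta" for \<theta>
  proof -
    have "loglik tail head K S n obs \<theta> = xi_loglik (Gamma tail head \<theta>)"
      by (rule loglik_eq_xi_loglik[OF \<theta>])
    also have "\<dots> \<le> xi_loglik xi_hat"
    proof (rule xi_loglik_le)
      show "0 < N1 i \<and> 0 < N0 i" for i using counts_pos by simp
      show "0 < Gamma tail head \<theta> i \<and> Gamma tail head \<theta> i < 1" for i by (rule Gamma_bounds[OF \<theta>])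
      show "0 < xi_hat i \<and> xi_hat i < 1" for i by (rule xi_hat_bounds)
      show "xi_hat j = 1 - rates j" if "parents tail head j = {}" for j
        using that not_root_iff_parents by (simp add: xi_hat_def)
      show "1 - xi_hat j = rates j * (1 - (\<Prod>l\<in>brothers tail j. xi_hat l))"
        if "parents tail head j \<noteq> {}" for j
      proof -
        have j: "j \<notin> roots S K" using that not_root_iff_parents by simp
        then have "xi_hat j = (1 - rates j) + rates j * pi_hat j" by (simp add: xi_hat_def)
        then show ?thesis using prod_xi_hat_brothers[OF j] by (simp add: algebra_simps)
      qed
    qed
    also have "\<dots> = loglik tail head K S n obs (Gamma_inv tail head xi_hat)"
      using loglik_eq_xi_loglik[OF \<theta>h] Gamma_\<theta>h by simp
    finally show ?thesis .
  qed
  then show ?thesis using \<theta>h by (simp add: is_MLE_def)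
qed

end

theorem mainTheorem7:
  fixes tail head :: "'e::finite \<Rightarrow> 'v"
    and K :: nat and S :: "nat \<Rightarrow> 'e" and n :: "nat \<Rightarrow> nat"
    and obs :: "nat \<Rightarrow> nat \<Rightarrow> 'e set"
  assumes net: "multicast_network tail head K S"
    and data: "\<forall>k<K. \<forall>t<n k. obs k t \<subseteq> {r \<in> tree_links tail head S k. is_leaf tail head r}"
    and reg1: "\<forall>i. n1 tail head K S n obs i > 0 \<and> n0 tail head K S n obs i > 0"
    and reg2: "\<forall>i. i \<notin> roots S K \<longrightarrow>
       (\<Sum>j \<in> parents tail head i. n1 tail head K S n obs j) < (\<Sum>j \<in> brothers tail i. n1 tail head K S n obs j)"
  shows "(let r = rate tail head K S n obs;
              \<pi> = (\<lambda>i. THE x. 0 < x \<and> x < 1 \<and> x = (\<Prod>j \<in> brothers tail i. (1 - r j) + r j * x));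
              \<xi>h = (\<lambda>i. if i \<in> roots S K then 1 - r i else (1 - r i) + r i * \<pi> i)
          in (\<forall>i. i \<notin> roots S K \<longrightarrow>
                 (\<exists>!x. 0 < x \<and> x < 1 \<and> x = (\<Prod>j \<in> brothers tail i. (1 - r j) + r j * x)))
           \<and> (\<exists>!\<xi>. (\<forall>i. 0 < \<xi> i \<and> \<xi> i < 1) \<and>
                 (\<forall>i. \<xi> i = (1 - r i) + r i * (if i \<notin> roots S K then 1 else 0) * (\<Prod>j \<in> brothers tail i. \<xi> j)))
           \<and> (\<forall>i. 0 < \<xi>h i \<and> \<xi>h i < 1)
           \<and> (\<forall>i. \<xi>h i = (1 - r i) + r i * (if i \<notin> roots S K then 1 else 0) * (\<Prod>j \<in> brothers tail i. \<xi>h j))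
           \<and> (\<xi>h \<in> Xi tail head \<longrightarrow>
                 Gamma_inv tail head \<xi>h \<in> Theta \<and> is_MLE tail head K S n obs (Gamma_inv tail head \<xi>h)))"
proof -
  interpret regular_probe_data tail head K S n obs
    by unfold_locales (fact net data reg1 reg2)+
  show ?thesis
    using ex1_brother_fixed_point ex1_xi_solution xi_hat_bounds xi_hat_eq Gamma_inv_xi_hat_is_MLE
    unfolding Let_def xi_hat_def pi_hat_def by blast
qed

end
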